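(* Let $p,q$ be odd primes with $q-p=2$, let $K=\mathbb{Q}(\sqrt{-7})$, and assume $p$ and $q$ are both inert in $K$. Let $E'=E'_-: y^2=x^3+2(p+q)x^2+4x$ and $\pi_2=-\frac{1+\sqrt{-7}}{2}$, $\overline{\pi_2}=\frac{-1+\sqrt{-7}}{2}$. Then: (1) if $d\in K(S,2)$ satisfies $\pi_2\mid d$ or $\overline{\pi_2}\mid d$, then $d\notin S^{(\widehat\varphi)}(E'/K)$; (2) $p,q\in S^{(\widehat\varphi)}(E'/K)$; (3) $-1\in S^{(\widehat\varphi)}(E'/K)$ iff $p\equiv 3,31,45\pmod{56}$.
   Context: Let $E=E_-: y^2=x(x-p)(x-q)$ and $\widehat\varphi:E'\to E$, $(x,y)\mapsto(y^2/(4x^2), y(4-x^2)/(8x^2))$, the dual of $\varphi:E\to E'$, $(x,y)\mapsto(y^2/x^2,y(pq-x^2)/x^2)$. Let $S=\{\infty\}\cup\{$primes of $K$ dividing $2pq\}$ and $K(S,2)=\{d\in K^*/K^{*2}:\ \mathrm{ord}_v(d)$ even for all $v\notin S\}=\langle -1,\pi_2,\overline{\pi_2},p,q\rangle$. The $\widehat\varphi$-Selmer group is identified with $S^{(\widehat\varphi)}(E'/K)=\{d\in K(S,2): C'_d(K_v)\neq\emptyset$ for all $v\in S\}$, where $C'_d: dw^2=d^2-(p+q)dz^2+pqz^4$. "$\pi\mid d$" means $\mathrm{ord}_\pi(d)$ is odd. *)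

theory Defs
  imports Complex_Main "HOL-Computational_Algebra.Primes"
begin

definition sqrtm7 :: complex where "sqrtm7 = \<i> * complex_of_real (sqrt 7)"

definition Kfield :: "complex set" where
  "Kfield = {of_rat a + of_rat b * sqrtm7 | a b. True}"

definition OK :: "complex set" where
  "OK = {of_int a + of_int b * ((1 + sqrtm7) / 2) | a b. True}"

definition dvdO :: "complex \<Rightarrow> complex \<Rightarrow> bool" where
  "dvdO x y \<longleftrightarrow> (\<exists>k\<in>OK. y = x * k)"

text \<open>Prime elements of O_K (generators of the nonzero prime ideals).\<close>
definition primeO :: "complex \<Rightarrow> bool" where
  "primeO \<pi> \<longleftrightarrow> \<pi> \<in> OK \<and> \<pi> \<noteq> 0 \<and> inverse \<pi> \<notin> OK \<and>
     (\<forall>a\<in>OK. \<forall>b\<in>OK. dvdO \<pi> (a * b) \<longrightarrow> dvdO \<pi> a \<or> dvdO \<pi> b)"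

definition ordK :: "complex \<Rightarrow> complex \<Rightarrow> int" where
  "ordK \<pi> x = (THE n::int. \<exists>u\<in>OK. \<exists>v\<in>OK. \<not> dvdO \<pi> u \<and> \<not> dvdO \<pi> v \<and>
                            x = \<pi> powi n * u / v)"

text \<open>x is pi-adically small: ord_pi(x) >= m (with ord_pi 0 = infinity).\<close>
definition vclose :: "complex \<Rightarrow> complex \<Rightarrow> int \<Rightarrow> bool" where
  "vclose \<pi> x m \<longleftrightarrow> x = 0 \<or> m \<le> ordK \<pi> x"

definition vcauchy :: "complex \<Rightarrow> (nat \<Rightarrow> complex) \<Rightarrow> bool" where
  "vcauchy \<pi> f \<longleftrightarrow> (\<forall>m::int. \<exists>N. \<forall>i\<ge>N. \<forall>j\<ge>N. vclose \<pi> (f i - f j) m)"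

definition vnull :: "complex \<Rightarrow> (nat \<Rightarrow> complex) \<Rightarrow> bool" where
  "vnull \<pi> f \<longleftrightarrow> (\<forall>m::int. \<exists>N. \<forall>i\<ge>N. vclose \<pi> (f i) m)"

definition Cres :: "nat \<Rightarrow> nat \<Rightarrow> complex \<Rightarrow> complex \<Rightarrow> complex \<Rightarrow> complex" where
  "Cres p q d z w = d * w\<^sup>2 - (d\<^sup>2 - (of_nat p + of_nat q) * d * z\<^sup>2 + of_nat p * of_nat q * z ^ 4)"

text \<open>C'_d(K_pi) is nonempty: a point of the completion K_pi is represented by pi-adic
  Cauchy sequences of elements of K, and the equation holds in K_pi iff the residual
  tends to 0 pi-adically.\<close>
definition loc_solv :: "nat \<Rightarrow> nat \<Rightarrow> complex \<Rightarrow> complex \<Rightarrow> bool" where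
  "loc_solv p q \<pi> d \<longleftrightarrow> (\<exists>z w. (\<forall>n. z n \<in> Kfield \<and> w n \<in> Kfield) \<and>
       vcauchy \<pi> z \<and> vcauchy \<pi> w \<and> vnull \<pi> (\<lambda>n. Cres p q d (z n) (w n)))"

text \<open>Archimedean place: K_infinity = C.\<close>
definition arch_solv :: "nat \<Rightarrow> nat \<Rightarrow> complex \<Rightarrow> bool" where
  "arch_solv p q d \<longleftrightarrow> (\<exists>z w :: complex. Cres p q d z w = 0)"

text \<open>K(S,2), as a set of representatives in K^*: ord_v(d) even for every prime v not in S,
  i.e. not dividing 2pq.\<close>
definition KS2 :: "nat \<Rightarrow> nat \<Rightarrow> complex set" where
  "KS2 p q = {d \<in> Kfield. d \<noteq> 0 \<and>
      (\<forall>\<pi>. primeO \<pi> \<and> \<not> dvdO \<pi> (2 * of_nat p * of_nat q) \<longrightarrow> even (ordK \<pi> d))}"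

text \<open>The phi-hat Selmer group S^(phi-hat)(E'/K), via its identification with
  {d in K(S,2) : C'_d(K_v) nonempty for all v in S}.\<close>
definition selmer :: "nat \<Rightarrow> nat \<Rightarrow> complex \<Rightarrow> bool" where
  "selmer p q d \<longleftrightarrow> d \<in> KS2 p q \<and> arch_solv p q d \<and>
      (\<forall>\<pi>. primeO \<pi> \<and> dvdO \<pi> (2 * of_nat p * of_nat q) \<longrightarrow> loc_solv p q \<pi> d)"

definition pi2 :: complex where "pi2 = - (1 + sqrtm7) / 2"
definition pi2bar :: complex where "pi2bar = (-1 + sqrtm7) / 2"

end

theory Submission
  imports Defs "HOL-Number_Theory.Number_Theory"
begin

text \<open>
  The places in S are pi2, pi2bar and the inert primes p and q; complex conjugation exchanges pi2
  and pi2bar. (1) If ord_pi2(d) is odd, then in d w^2 = (d - p z^2)(d - q z^2) (up to a small error)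
  both factors on the right have the same valuation, so the two sides have valuations of different
  parity. (2) (z, w) = (1, 0) is a global point of C'_p and of C'_q. (3) Quadratic reciprocity makes
  p and p + 2 both inert only if p = 3 (mod 7). At an inert prime l, -1 is a square in the residue
  field of order l^2 and lifts by Hensel's lemma to a point with z = 0. At pi2, where K is 2-adic,
  explicit approximate points lift when p = 3 (mod 4) or p = 5 (mod 8), while for p = 1 (mod 8) a
  case split on ord z shows that C'_{-1} has no point modulo pi2^4. With p = 3 (mod 7) the
  condition p \<noteq> 1 (mod 8) becomes p = 3, 31, 45 (mod 56).
\<close>

section \<open>The ring of integers of Q(sqrt(-7))\<close>

definition om :: complex where "om = (1 + sqrtm7) / 2"

lemma sqrtm7_square: "sqrtm7 ^ 2 = -7"
  by (simp add: sqrtm7_def power_mult_distrib flip: of_real_power)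

lemma sqrtm7_om: "sqrtm7 = 2 * om - 1"
  by (simp add: om_def field_simps)

lemma om_mult_om: "om * om = om - 2"
proof -
  have "om ^ 2 = (1 + 2 * sqrtm7 + sqrtm7 ^ 2) / 4"
    by (simp add: om_def power2_eq_square field_simps)
  also have "\<dots> = om - 2" by (simp add: sqrtm7_square om_def field_simps)
  finally show ?thesis by (simp add: power2_eq_square)
qed

lemma om_mult_om_mult: "om * (om * z) = om * z - 2 * z"
  by (metis mult.assoc om_mult_om left_diff_distrib)

lemma Im_om: "Im om = sqrt 7 / 2"
  by (simp add: om_def sqrtm7_def)

lemma cnj_om: "cnj om = 1 - om"
  by (simp add: complex_eq_iff om_def sqrtm7_def)

lemma OK_iff: "x \<in> OK \<longleftrightarrow> (\<exists>a b. x = of_int a + of_int b * om)"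
  by (auto simp: OK_def om_def)

lemma OK_coords_unique:
  assumes "of_int a + of_int b * om = (of_int c + of_int d * om :: complex)"
  shows "a = c \<and> b = d"
proof -
  from arg_cong[OF assms, of Im] have "b = d" by (simp add: Im_om)
  with assms show ?thesis by simp
qed

lemma OK_I: "of_int a + of_int b * om \<in> OK"
  by (auto simp: OK_iff)

lemma OK_add: "x \<in> OK \<Longrightarrow> y \<in> OK \<Longrightarrow> x + y \<in> OK"
proof -
  assume "x \<in> OK" "y \<in> OK"
  then obtain a b c d where "x = of_int a + of_int b * om" "y = of_int c + of_int d * om"
    by (auto simp: OK_iff)
  then have "x + y = of_int (a + c) + of_int (b + d) * om" by (simp add: algebra_simps)
  then show ?thesis by (metis OK_I)
qed

lemma OK_uminus: "x \<in> OK \<Longrightarrow> - x \<in> OK"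
proof -
  assume "x \<in> OK"
  then obtain a b where "x = of_int a + of_int b * om" by (auto simp: OK_iff)
  then have "- x = of_int (- a) + of_int (- b) * om" by (simp add: algebra_simps)
  then show ?thesis by (metis OK_I)
qed

lemma OK_diff: "x \<in> OK \<Longrightarrow> y \<in> OK \<Longrightarrow> x - y \<in> OK"
  using OK_add[of x "- y"] OK_uminus[of y] by simp

lemma OK_mult: "x \<in> OK \<Longrightarrow> y \<in> OK \<Longrightarrow> x * y \<in> OK"
proof -
  assume "x \<in> OK" "y \<in> OK"
  then obtain a b c d where "x = of_int a + of_int b * om" "y = of_int c + of_int d * om"
    by (auto simp: OK_iff)
  then have "x * y = of_int (a * c - 2 * b * d) + of_int (a * d + b * c + b * d) * om"
    by (simp add: om_mult_om_mult algebra_simps)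
  then show ?thesis by (metis OK_I)
qed

lemma OK_cnj: "x \<in> OK \<Longrightarrow> cnj x \<in> OK"
proof -
  assume "x \<in> OK"
  then obtain a b where "x = of_int a + of_int b * om" by (auto simp: OK_iff)
  then have "cnj x = of_int (a + b) + of_int (- b) * om" by (simp add: cnj_om algebra_simps)
  then show ?thesis by (metis OK_I)
qed

lemma OK_cnj_iff: "cnj x \<in> OK \<longleftrightarrow> x \<in> OK"
  using OK_cnj[of x] OK_cnj[of "cnj x"] by auto

lemma OK_of_int [simp]: "of_int n \<in> OK"
  using OK_I[of n 0] by simp

lemma OK_of_nat [simp]: "of_nat n \<in> OK"
  using OK_of_int[of "int n"] by simp

lemma OK_numeral [simp]: "numeral n \<in> OK"
  using OK_of_int[of "numeral n"] by simp

lemma OK_0 [simp]: "0 \<in> OK" and OK_1 [simp]: "1 \<in> OK"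
  using OK_of_int[of 0] OK_of_int[of 1] by simp_all

lemma OK_power: "x \<in> OK \<Longrightarrow> x ^ n \<in> OK"
  by (induction n) (auto intro: OK_mult)

lemma sqrtm7_OK: "sqrtm7 \<in> OK"
  using OK_I[of "-1" 2] by (simp add: sqrtm7_om)

lemma OK_norm_nat:
  assumes "x \<in> OK"
  shows "\<exists>n::nat. (cmod x)^2 = real n \<and> x * cnj x = of_nat n"
proof -
  obtain a b where x: "x = of_int a + of_int b * om" using assms by (auto simp: OK_iff)
  have "x * cnj x = of_int (a * a + a * b + 2 * b * b)"
    by (simp add: x cnj_om algebra_simps om_mult_om_mult)
  moreover have "a * a + a * b + 2 * b * b \<ge> 0"
  proof -
    have "0 \<le> (2 * a + b)^2 + 7 * b^2" by simp
    also have "\<dots> = 4 * (a * a + a * b + 2 * b * b)" by (simp add: power2_eq_square algebra_simps)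
    finally show ?thesis by simp
  qed
  moreover have "x * cnj x = complex_of_real ((cmod x)^2)"
    by (rule complex_norm_square[symmetric])
  ultimately show ?thesis
    by (intro exI[of _ "nat (a * a + a * b + 2 * b * b)"])
      (metis of_int_of_nat_eq int_nat_eq of_real_eq_iff of_real_of_nat_eq complex_of_real_def)
qed

lemma dvdO_0 [simp]: "dvdO x 0"
  unfolding dvdO_def using OK_0 by (metis mult_zero_right)

lemma dvdO_refl: "dvdO x x"
  unfolding dvdO_def by (rule bexI[of _ 1]) auto

lemma dvdO_triv_left: "c \<in> OK \<Longrightarrow> dvdO a (a * c)"
  by (auto simp: dvdO_def)

lemma dvdO_mult_right: "dvdO a b \<Longrightarrow> c \<in> OK \<Longrightarrow> dvdO a (b * c)"
  unfolding dvdO_def by (metis OK_mult mult.assoc)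

lemma dvdO_mult_left: "dvdO a b \<Longrightarrow> c \<in> OK \<Longrightarrow> dvdO a (c * b)"
  using dvdO_mult_right[of a b c] by (simp add: mult.commute)

lemma dvdO_trans: "dvdO a b \<Longrightarrow> dvdO b c \<Longrightarrow> dvdO a c"
  by (auto simp: dvdO_def) (metis OK_mult mult.assoc)

lemma dvdO_add: "dvdO a b \<Longrightarrow> dvdO a c \<Longrightarrow> dvdO a (b + c)"
  by (auto simp: dvdO_def) (metis OK_add distrib_left)

lemma dvdO_uminus: "dvdO a b \<Longrightarrow> dvdO a (- b)"
  by (auto simp: dvdO_def) (metis OK_uminus mult_minus_right)

lemma dvdO_diff: "dvdO a b \<Longrightarrow> dvdO a c \<Longrightarrow> dvdO a (b - c)"
  using dvdO_add[of a b "- c"] dvdO_uminus[of a c] by simp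

lemma dvdO_cnj: "dvdO a b \<Longrightarrow> dvdO (cnj a) (cnj b)"
  unfolding dvdO_def by (auto intro: OK_cnj)

lemma dvdO_cnj_iff: "dvdO (cnj a) (cnj b) \<longleftrightarrow> dvdO a b"
  using dvdO_cnj[of "cnj a" "cnj b"] dvdO_cnj[of a b] by auto

lemma dvdO_of_int: "n dvd m \<Longrightarrow> dvdO (of_int n) (of_int m)"
  unfolding dvdO_def by (auto intro!: bexI[of _ "of_int (m div n)"])

lemma dvdO_of_int_coords: "dvdO (of_int n) (of_int a + of_int b * om) \<Longrightarrow> n dvd a \<and> n dvd b"
proof -
  assume "dvdO (of_int n) (of_int a + of_int b * om)"
  then obtain k where k: "k \<in> OK" "of_int a + of_int b * om = of_int n * k"
    by (auto simp: dvdO_def)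
  then obtain e f where "k = of_int e + of_int f * om" by (auto simp: OK_iff)
  with k(2) have "of_int a + of_int b * om = of_int (n * e) + of_int (n * f) * om"
    by (simp add: algebra_simps)
  then have "a = n * e \<and> b = n * f" by (rule OK_coords_unique)
  then show ?thesis by simp
qed

lemma primeO_OK: "primeO \<pi> \<Longrightarrow> \<pi> \<in> OK"
  by (simp add: primeO_def)

lemma primeO_nonzero: "primeO \<pi> \<Longrightarrow> \<pi> \<noteq> 0"
  by (simp add: primeO_def)

lemma primeO_dvd_mult:
  "primeO \<pi> \<Longrightarrow> a \<in> OK \<Longrightarrow> b \<in> OK \<Longrightarrow> dvdO \<pi> (a * b) \<Longrightarrow> dvdO \<pi> a \<or> dvdO \<pi> b"
  by (simp add: primeO_def)

lemma primeO_not_dvd_1: "primeO \<pi> \<Longrightarrow> \<not> dvdO \<pi> 1"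
proof
  assume "primeO \<pi>" "dvdO \<pi> 1"
  then obtain k where "k \<in> OK" "1 = \<pi> * k" by (auto simp: dvdO_def)
  then have "inverse \<pi> \<in> OK" by (metis inverse_unique)
  with \<open>primeO \<pi>\<close> show False by (simp add: primeO_def)
qed

lemma primeO_dvd_power: "primeO \<pi> \<Longrightarrow> a \<in> OK \<Longrightarrow> dvdO \<pi> (a ^ n) \<Longrightarrow> dvdO \<pi> a"
proof (induction n)
  case 0
  then show ?case using primeO_not_dvd_1 by simp
next
  case (Suc n)
  then show ?case using primeO_dvd_mult[of \<pi> a "a ^ n"] OK_power by auto
qed

lemma primeO_cnj: "primeO \<pi> \<Longrightarrow> primeO (cnj \<pi>)"
  unfolding primeO_def
proof (intro conjI ballI impI)
  assume \<pi>: "\<pi> \<in> OK \<and> \<pi> \<noteq> 0 \<and> inverse \<pi> \<notin> OK \<and>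
    (\<forall>a\<in>OK. \<forall>b\<in>OK. dvdO \<pi> (a * b) \<longrightarrow> dvdO \<pi> a \<or> dvdO \<pi> b)"
  then show "cnj \<pi> \<in> OK" "cnj \<pi> \<noteq> 0" "inverse (cnj \<pi>) \<notin> OK"
    using OK_cnj OK_cnj_iff[of "inverse \<pi>"] by (auto simp: complex_cnj_inverse)
  fix x y assume xy: "x \<in> OK" "y \<in> OK" "dvdO (cnj \<pi>) (x * y)"
  then have "dvdO \<pi> (cnj x * cnj y)" using dvdO_cnj[of "cnj \<pi>" "x * y"] by simp
  then have "dvdO \<pi> (cnj x) \<or> dvdO \<pi> (cnj y)" using \<pi> xy OK_cnj by blast
  then show "dvdO (cnj \<pi>) x \<or> dvdO (cnj \<pi>) y" using dvdO_cnj by fastforce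
qed

lemma primeO_norm_ge_2: assumes "primeO \<pi>" shows "(cmod \<pi>)^2 \<ge> 2"
proof -
  obtain n :: nat where n: "(cmod \<pi>)^2 = real n" "\<pi> * cnj \<pi> = of_nat n"
    using OK_norm_nat primeO_OK assms by blast
  have "n \<noteq> 0" using n primeO_nonzero[OF assms]
    by (metis complex_cnj_zero_iff mult_eq_0_iff of_nat_0)
  moreover have "n \<noteq> 1"
  proof
    assume "n = 1"
    then have "inverse \<pi> = cnj \<pi>" using n(2) by (metis inverse_unique of_nat_1)
    then show False using assms OK_cnj unfolding primeO_def by auto
  qed
  ultimately show ?thesis using n by simp
qed

text \<open>Induction on the norm, which drops by a factor of at least 2 with every factor \<pi>.\<close>
lemma OK_prime_power_factor:
  assumes "primeO \<pi>" "x \<in> OK" "x \<noteq> 0"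
  shows "\<exists>k u. u \<in> OK \<and> \<not> dvdO \<pi> u \<and> x = \<pi> ^ k * u"
proof -
  have "x \<in> OK \<Longrightarrow> x \<noteq> 0 \<Longrightarrow> (cmod x)^2 = real n \<Longrightarrow> \<exists>k u. u \<in> OK \<and> \<not> dvdO \<pi> u \<and> x = \<pi> ^ k * u"
    for n x
  proof (induction n arbitrary: x rule: less_induct)
    case (less n)
    show ?case
    proof (cases "dvdO \<pi> x")
      case False
      then show ?thesis using less.prems by (intro exI[of _ 0] exI[of _ x]) auto
    next
      case True
      then obtain y where y: "y \<in> OK" "x = \<pi> * y" by (auto simp: dvdO_def)
      with less.prems have "y \<noteq> 0" by auto
      obtain m :: nat where m: "(cmod y)^2 = real m" using OK_norm_nat y by blast
      have "(cmod x)^2 = (cmod \<pi>)^2 * (cmod y)^2"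
        by (simp add: y norm_mult power_mult_distrib)
      moreover have "2 * (cmod y)^2 \<le> (cmod \<pi>)^2 * (cmod y)^2"
        by (rule mult_right_mono) (use primeO_norm_ge_2[OF assms(1)] in auto)
      moreover have "(cmod y)^2 > 0" using \<open>y \<noteq> 0\<close> by simp
      ultimately have "(cmod y)^2 < (cmod x)^2" by linarith
      then have "m < n" using m less.prems by simp
      then obtain k u where "u \<in> OK" "\<not> dvdO \<pi> u" "y = \<pi> ^ k * u"
        using less.IH y \<open>y \<noteq> 0\<close> m by blast
      then show ?thesis using y by (intro exI[of _ "Suc k"] exI[of _ u]) auto
    qed
  qed
  with assms OK_norm_nat[OF assms(2)] show ?thesis by blast
qed

lemma Kfield_iff: "x \<in> Kfield \<longleftrightarrow> (\<exists>y\<in>OK. \<exists>D::int. D \<noteq> 0 \<and> x = y / of_int D)"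
proof
  assume "x \<in> Kfield"
  then obtain a b where x: "x = of_rat a + of_rat b * sqrtm7" by (auto simp: Kfield_def)
  obtain A D where aD: "quotient_of a = (A, D)" by (cases "quotient_of a")
  obtain B E where bE: "quotient_of b = (B, E)" by (cases "quotient_of b")
  have D: "D > 0" "a = of_int A / of_int D"
    using aD quotient_of_denom_pos quotient_of_div by blast+
  have E: "E > 0" "b = of_int B / of_int E"
    using bE quotient_of_denom_pos quotient_of_div by blast+
  have ra: "of_rat a = (of_int A / of_int D :: complex)" using D by (simp add: of_rat_divide)
  have rb: "of_rat b = (of_int B / of_int E :: complex)" using E by (simp add: of_rat_divide)
  have "x = (of_int (A * E - B * D) + of_int (2 * B * D) * om) / of_int (D * E)"
    using D E by (simp add: x ra rb sqrtm7_om field_simps)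
  with D E show "\<exists>y\<in>OK. \<exists>D::int. D \<noteq> 0 \<and> x = y / of_int D"
    by (intro bexI[OF _ OK_I[of "A * E - B * D" "2 * B * D"]] exI[of _ "D * E"]) auto
next
  assume "\<exists>y\<in>OK. \<exists>D::int. D \<noteq> 0 \<and> x = y / of_int D"
  then obtain a b D where x: "x = (of_int a + of_int b * om) / of_int D" "D \<noteq> 0"
    by (auto simp: OK_iff)
  then have "x = of_rat ((of_int a + of_int b / 2) / of_int D) + of_rat (of_int b / 2 / of_int D) * sqrtm7"
    by (simp add: om_def of_rat_divide of_rat_add of_rat_mult field_simps)
  then show "x \<in> Kfield" unfolding Kfield_def by blast
qed

lemma OK_Kfield: "x \<in> OK \<Longrightarrow> x \<in> Kfield"
  unfolding Kfield_iff by (intro bexI[of _ x] exI[of _ 1]) auto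

lemma Kfield_add: "x \<in> Kfield \<Longrightarrow> y \<in> Kfield \<Longrightarrow> x + y \<in> Kfield"
proof -
  assume "x \<in> Kfield" "y \<in> Kfield"
  then obtain a D b E where "a \<in> OK" "D \<noteq> 0" "x = a / of_int D" "b \<in> OK" "E \<noteq> 0" "y = b / of_int E"
    by (auto simp: Kfield_iff)
  then have "x + y = (a * of_int E + b * of_int D) / of_int (D * E)" "D * E \<noteq> 0"
    by (simp_all add: field_simps)
  moreover have "a * of_int E + b * of_int D \<in> OK"
    using \<open>a \<in> OK\<close> \<open>b \<in> OK\<close> by (intro OK_add OK_mult) auto
  ultimately show ?thesis unfolding Kfield_iff by blast
qed

lemma Kfield_mult: "x \<in> Kfield \<Longrightarrow> y \<in> Kfield \<Longrightarrow> x * y \<in> Kfield"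
proof -
  assume "x \<in> Kfield" "y \<in> Kfield"
  then obtain a D b E where "a \<in> OK" "D \<noteq> 0" "x = a / of_int D" "b \<in> OK" "E \<noteq> 0" "y = b / of_int E"
    by (auto simp: Kfield_iff)
  then have "x * y = (a * b) / of_int (D * E)" "D * E \<noteq> 0"
    by (simp_all add: field_simps)
  moreover have "a * b \<in> OK" using \<open>a \<in> OK\<close> \<open>b \<in> OK\<close> by (rule OK_mult)
  ultimately show ?thesis unfolding Kfield_iff by blast
qed

lemma Kfield_of_int [simp]: "of_int i \<in> Kfield"
  and Kfield_of_nat [simp]: "of_nat m \<in> Kfield"
  and Kfield_numeral [simp]: "numeral n \<in> Kfield"
  and Kfield_0 [simp]: "0 \<in> Kfield"
  and Kfield_1 [simp]: "1 \<in> Kfield"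
  by (simp_all add: OK_Kfield)

lemma Kfield_uminus: "x \<in> Kfield \<Longrightarrow> - x \<in> Kfield"
  using Kfield_mult[of "-1" x] OK_Kfield[of "-1"] OK_uminus[of 1] by simp

lemma Kfield_diff: "x \<in> Kfield \<Longrightarrow> y \<in> Kfield \<Longrightarrow> x - y \<in> Kfield"
  using Kfield_add[of x "- y"] Kfield_uminus by simp

lemma Kfield_inverse: "x \<in> Kfield \<Longrightarrow> inverse x \<in> Kfield"
proof -
  assume "x \<in> Kfield"
  then obtain a D where a: "a \<in> OK" "D \<noteq> 0" "x = a / of_int D" by (auto simp: Kfield_iff)
  show ?thesis
  proof (cases "a = 0")
    case False
    obtain n :: nat where n: "a * cnj a = of_nat n" using OK_norm_nat a(1) by blast
    with False have "n \<noteq> 0" by (metis complex_cnj_zero_iff mult_eq_0_iff of_nat_0)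
    have "inverse x = of_int D / a" using a by simp
    also have "\<dots> = (of_int D * cnj a) / (a * cnj a)" using False by simp
    also have "\<dots> = (of_int D * cnj a) / of_int (int n)" using n by simp
    finally have "inverse x = (of_int D * cnj a) / of_int (int n)" .
    moreover have "of_int D * cnj a \<in> OK" using a by (intro OK_mult OK_cnj) auto
    ultimately show ?thesis unfolding Kfield_iff using \<open>n \<noteq> 0\<close>
      by (intro bexI[of _ "of_int D * cnj a"] exI[of _ "int n"]) auto
  qed (use a in simp)
qed

lemma Kfield_divide: "x \<in> Kfield \<Longrightarrow> y \<in> Kfield \<Longrightarrow> x / y \<in> Kfield"
  using Kfield_mult[of x "inverse y"] Kfield_inverse by (simp add: divide_inverse)

lemma Kfield_power: "x \<in> Kfield \<Longrightarrow> x ^ n \<in> Kfield"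
  by (induction n) (auto intro: Kfield_mult)

lemma Kfield_powi: "x \<in> Kfield \<Longrightarrow> x powi j \<in> Kfield"
  by (auto simp: power_int_def intro: Kfield_power Kfield_inverse)

lemma Kfield_cnj: "x \<in> Kfield \<Longrightarrow> cnj x \<in> Kfield"
proof -
  assume "x \<in> Kfield"
  then obtain y D where "y \<in> OK" "D \<noteq> 0" "x = y / of_int D" by (auto simp: Kfield_iff)
  then have "cnj x = cnj y / of_int D" "cnj y \<in> OK" by (auto simp: OK_cnj)
  with \<open>D \<noteq> 0\<close> show ?thesis unfolding Kfield_iff by blast
qed

lemmas Kfield_closed = Kfield_add Kfield_mult Kfield_diff Kfield_uminus Kfield_power
  Kfield_inverse Kfield_divide Kfield_of_nat Kfield_of_int Kfield_numeral Kfield_0 Kfield_1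

lemma Cres_Kfield: "d \<in> Kfield \<Longrightarrow> z \<in> Kfield \<Longrightarrow> w \<in> Kfield \<Longrightarrow> Cres p q d z w \<in> Kfield"
  unfolding Cres_def by (auto intro!: Kfield_closed)

section \<open>The \<pi>-adic valuation\<close>

definition has_ord :: "complex \<Rightarrow> complex \<Rightarrow> int \<Rightarrow> bool" where
  "has_ord \<pi> x n \<longleftrightarrow> (\<exists>u\<in>OK. \<exists>v\<in>OK. \<not> dvdO \<pi> u \<and> \<not> dvdO \<pi> v \<and> x = \<pi> powi n * u / v)"

lemma ordK_eq_The: "ordK \<pi> x = (THE n. has_ord \<pi> x n)"
  by (simp add: ordK_def has_ord_def)

lemma has_ord_cnj: "has_ord \<pi> x n \<Longrightarrow> has_ord (cnj \<pi>) (cnj x) n"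
proof -
  assume "has_ord \<pi> x n"
  then obtain u v where uv: "u \<in> OK" "v \<in> OK" "\<not> dvdO \<pi> u" "\<not> dvdO \<pi> v" "x = \<pi> powi n * u / v"
    by (auto simp: has_ord_def)
  then have "cnj x = cnj \<pi> powi n * cnj u / cnj v"
    by (simp add: power_int_def complex_cnj_power complex_cnj_inverse)
  moreover have "cnj u \<in> OK" "cnj v \<in> OK" "\<not> dvdO (cnj \<pi>) (cnj u)" "\<not> dvdO (cnj \<pi>) (cnj v)"
    using uv by (auto simp: OK_cnj dvdO_cnj_iff)
  ultimately show ?thesis unfolding has_ord_def by blast
qed

lemma ordK_cnj: "ordK (cnj \<pi>) (cnj x) = ordK \<pi> x"
proof -
  have "has_ord (cnj \<pi>) (cnj x) = has_ord \<pi> x"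
    using has_ord_cnj[of "cnj \<pi>" "cnj x"] has_ord_cnj[of \<pi> x] by (auto simp: fun_eq_iff)
  then show ?thesis unfolding ordK_eq_The by simp
qed

lemma vclose_cnj: "vclose (cnj \<pi>) (cnj x) m \<longleftrightarrow> vclose \<pi> x m"
  by (simp add: vclose_def ordK_cnj)

lemma vclose_0 [simp]: "vclose \<pi> 0 m"
  by (simp add: vclose_def)

lemma vclose_mono: "vclose \<pi> x m \<Longrightarrow> k \<le> m \<Longrightarrow> vclose \<pi> x k"
  by (auto simp: vclose_def)

lemma vclose_ordK: "vclose \<pi> x (ordK \<pi> x)"
  by (simp add: vclose_def)

context
  fixes \<pi> assumes prime: "primeO \<pi>"
begin

lemma has_ord_unique_less:
  assumes "has_ord \<pi> x n" "has_ord \<pi> x m" "n < m"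
  shows False
proof -
  obtain u v where uv: "u \<in> OK" "v \<in> OK" "\<not> dvdO \<pi> u" "\<not> dvdO \<pi> v" "x = \<pi> powi n * u / v"
    using assms(1) by (auto simp: has_ord_def)
  obtain u' v' where uv': "u' \<in> OK" "v' \<in> OK" "\<not> dvdO \<pi> u'" "\<not> dvdO \<pi> v'" "x = \<pi> powi m * u' / v'"
    using assms(2) by (auto simp: has_ord_def)
  define k where "k = nat (m - n)"
  have \<pi>0: "\<pi> \<noteq> 0" using primeO_nonzero prime by simp
  have mk: "m - n = int k" using assms(3) by (simp add: k_def)
  have "\<pi> powi m = \<pi> powi n * \<pi> powi (m - n)"
    using power_int_add[of \<pi> n "m - n"] \<pi>0 by simp
  then have "\<pi> powi m = \<pi> powi n * \<pi> ^ k" unfolding mk by simp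
  then have "\<pi> powi n * u / v = \<pi> powi n * (\<pi> ^ k * u') / v'" using uv uv' by (metis mult.assoc)
  then have "\<pi> powi n * (u / v) = \<pi> powi n * (\<pi> ^ k * u' / v')" by (simp only: times_divide_eq_right)
  moreover have "\<pi> powi n \<noteq> 0" using \<pi>0 by simp
  ultimately have "u / v = \<pi> ^ k * u' / v'" by (simp only: mult_cancel_left) simp
  moreover have "v \<noteq> 0" "v' \<noteq> 0" using uv(4) uv'(4) by auto
  ultimately have e1: "u * v' = \<pi> ^ k * u' * v" by (simp add: field_simps)
  have "k > 0" using assms(3) by (simp add: k_def)
  then have "\<pi> ^ k = \<pi> * \<pi> ^ (k - 1)" by (cases k) auto
  then have eq: "u * v' = \<pi> * (\<pi> ^ (k - 1) * u' * v)" using e1 by (simp add: mult.assoc)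
  have "dvdO \<pi> (u * v')" unfolding eq
    by (rule dvdO_triv_left) (intro OK_mult OK_power primeO_OK[OF prime] uv uv')
  then show False using primeO_dvd_mult[OF prime uv(1) uv'(2)] uv uv' by blast
qed

lemma has_ord_unique: "has_ord \<pi> x n \<Longrightarrow> has_ord \<pi> x m \<Longrightarrow> n = m"
  using has_ord_unique_less[of x n m] has_ord_unique_less[of x m n] by fastforce

lemma ordK_eqI: "has_ord \<pi> x n \<Longrightarrow> ordK \<pi> x = n"
  unfolding ordK_eq_The by (rule the_equality) (auto intro: has_ord_unique)

lemma has_ord_ordK:
  assumes "x \<in> Kfield" "x \<noteq> 0"
  shows "has_ord \<pi> x (ordK \<pi> x)"
proof -
  obtain y D where yD: "y \<in> OK" "D \<noteq> 0" "x = y / of_int D" using assms by (auto simp: Kfield_iff)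
  with assms(2) have "y \<noteq> 0" by auto
  obtain k u where ku: "u \<in> OK" "\<not> dvdO \<pi> u" "y = \<pi> ^ k * u"
    using OK_prime_power_factor[OF prime yD(1) \<open>y \<noteq> 0\<close>] by blast
  obtain j v where jv: "v \<in> OK" "\<not> dvdO \<pi> v" "of_int D = \<pi> ^ j * v"
    using OK_prime_power_factor[OF prime, of "of_int D"] yD(2) by auto
  have \<pi>0: "\<pi> \<noteq> 0" using primeO_nonzero prime by simp
  have "\<pi> powi (int k - int j) = \<pi> ^ k / \<pi> ^ j" using power_int_diff[of \<pi> "int k" "int j"] \<pi>0 by simp
  then have "x = \<pi> powi (int k - int j) * u / v" using yD(3) ku jv \<pi>0 by simp
  then have "has_ord \<pi> x (int k - int j)" using ku jv unfolding has_ord_def by blast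
  then show ?thesis using ordK_eqI by simp
qed

lemma has_ord_mult: "has_ord \<pi> x n \<Longrightarrow> has_ord \<pi> y m \<Longrightarrow> has_ord \<pi> (x * y) (n + m)"
proof -
  assume "has_ord \<pi> x n" "has_ord \<pi> y m"
  then obtain u v u' v' where uv: "u \<in> OK" "v \<in> OK" "\<not> dvdO \<pi> u" "\<not> dvdO \<pi> v" "x = \<pi> powi n * u / v"
    and uv': "u' \<in> OK" "v' \<in> OK" "\<not> dvdO \<pi> u'" "\<not> dvdO \<pi> v'" "y = \<pi> powi m * u' / v'"
    by (auto simp: has_ord_def)
  have "x * y = \<pi> powi (n + m) * (u * u') / (v * v')"
    using primeO_nonzero[OF prime] by (simp add: uv uv' power_int_add)
  moreover have "\<not> dvdO \<pi> (u * u')" "\<not> dvdO \<pi> (v * v')"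
    using primeO_dvd_mult[OF prime] uv uv' by blast+
  ultimately show ?thesis unfolding has_ord_def using uv uv' OK_mult by blast
qed

lemma has_ord_inverse: "has_ord \<pi> x n \<Longrightarrow> has_ord \<pi> (inverse x) (- n)"
proof -
  assume "has_ord \<pi> x n"
  then obtain u v where uv: "u \<in> OK" "v \<in> OK" "\<not> dvdO \<pi> u" "\<not> dvdO \<pi> v" "x = \<pi> powi n * u / v"
    by (auto simp: has_ord_def)
  have "inverse x = \<pi> powi (- n) * v / u" by (simp add: uv power_int_minus field_simps)
  then show ?thesis unfolding has_ord_def using uv by blast
qed

lemma has_ord_uminus: "has_ord \<pi> x n \<Longrightarrow> has_ord \<pi> (- x) n"
proof -
  assume "has_ord \<pi> x n"
  then obtain u v where uv: "u \<in> OK" "v \<in> OK" "\<not> dvdO \<pi> u" "\<not> dvdO \<pi> v" "x = \<pi> powi n * u / v"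
    by (auto simp: has_ord_def)
  have "- x = \<pi> powi n * (- u) / v" by (simp add: uv)
  moreover have "\<not> dvdO \<pi> (- u)" using dvdO_uminus[of \<pi> "- u"] uv by auto
  ultimately show ?thesis unfolding has_ord_def using uv OK_uminus by blast
qed

lemma has_ord_power_mult_unit: "u \<in> OK \<Longrightarrow> \<not> dvdO \<pi> u \<Longrightarrow> has_ord \<pi> (\<pi> ^ k * u) (int k)"
  unfolding has_ord_def using primeO_not_dvd_1[OF prime] by (intro bexI[of _ u] bexI[of _ 1]) auto

lemma ordK_mult:
  "x \<in> Kfield \<Longrightarrow> y \<in> Kfield \<Longrightarrow> x \<noteq> 0 \<Longrightarrow> y \<noteq> 0 \<Longrightarrow> ordK \<pi> (x * y) = ordK \<pi> x + ordK \<pi> y"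
  by (rule ordK_eqI, rule has_ord_mult) (auto intro: has_ord_ordK)

lemma ordK_inverse: "x \<in> Kfield \<Longrightarrow> x \<noteq> 0 \<Longrightarrow> ordK \<pi> (inverse x) = - ordK \<pi> x"
  by (rule ordK_eqI, rule has_ord_inverse) (auto intro: has_ord_ordK)

lemma ordK_uminus: "x \<in> Kfield \<Longrightarrow> x \<noteq> 0 \<Longrightarrow> ordK \<pi> (- x) = ordK \<pi> x"
  by (rule ordK_eqI, rule has_ord_uminus) (auto intro: has_ord_ordK)

lemma ordK_power_mult_unit: "u \<in> OK \<Longrightarrow> \<not> dvdO \<pi> u \<Longrightarrow> ordK \<pi> (\<pi> ^ k * u) = int k"
  by (rule ordK_eqI) (rule has_ord_power_mult_unit)

lemma ordK_unit: "u \<in> OK \<Longrightarrow> \<not> dvdO \<pi> u \<Longrightarrow> ordK \<pi> u = 0"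
  using ordK_power_mult_unit[of u 0] by simp

lemma ordK_1: "ordK \<pi> 1 = 0"
  using ordK_unit[OF OK_1 primeO_not_dvd_1[OF prime]] .

lemma ordK_power: "x \<in> Kfield \<Longrightarrow> x \<noteq> 0 \<Longrightarrow> ordK \<pi> (x ^ n) = int n * ordK \<pi> x"
  by (induction n) (auto simp: ordK_mult Kfield_power algebra_simps ordK_1)

lemma ordK_powi: "ordK \<pi> (\<pi> powi j) = j"
  by (rule ordK_eqI) (unfold has_ord_def, use primeO_not_dvd_1[OF prime] in \<open>intro bexI[of _ 1]; simp\<close>)

lemma ordK_OK: "x \<in> OK \<Longrightarrow> x \<noteq> 0 \<Longrightarrow> ordK \<pi> x \<ge> 0"
  using OK_prime_power_factor[OF prime] ordK_power_mult_unit by fastforce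

lemma vclose_OK: "x \<in> OK \<Longrightarrow> vclose \<pi> x 0"
  using ordK_OK by (auto simp: vclose_def)

lemma vclose_mult:
  "x \<in> Kfield \<Longrightarrow> y \<in> Kfield \<Longrightarrow> vclose \<pi> x m \<Longrightarrow> vclose \<pi> y k \<Longrightarrow> vclose \<pi> (x * y) (m + k)"
  by (cases "x = 0"; cases "y = 0") (auto simp: vclose_def ordK_mult)

lemma vclose_uminus: "x \<in> Kfield \<Longrightarrow> vclose \<pi> x m \<Longrightarrow> vclose \<pi> (- x) m"
  by (cases "x = 0") (auto simp: vclose_def ordK_uminus)

lemma vclose_OK_mult: "a \<in> OK \<Longrightarrow> x \<in> Kfield \<Longrightarrow> vclose \<pi> x m \<Longrightarrow> vclose \<pi> (a * x) m"
  using vclose_mult[of a x 0 m] vclose_OK OK_Kfield by simp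

lemma vclose_power2: "x \<in> Kfield \<Longrightarrow> vclose \<pi> x m \<Longrightarrow> vclose \<pi> (x ^ 2) (2 * m)"
  using vclose_mult[of x x m m] by (simp add: power2_eq_square)

lemma vclose_power4: "x \<in> Kfield \<Longrightarrow> vclose \<pi> x m \<Longrightarrow> vclose \<pi> (x ^ 4) (4 * m)"
  using vclose_power2[of "x ^ 2" "2 * m"] vclose_power2[of x m] Kfield_power[of x 2]
  by (simp flip: power_mult)

lemma vclose_power_mult: "y \<in> OK \<Longrightarrow> vclose \<pi> (\<pi> ^ k * y) (int k)"
proof -
  assume y: "y \<in> OK"
  have "vclose \<pi> (\<pi> ^ k) (int k)" using ordK_powi[of "int k"] by (simp add: vclose_def)
  with vclose_OK[OF y] show ?thesis
    using vclose_mult[of "\<pi> ^ k" y "int k" 0] Kfield_power OK_Kfield primeO_OK[OF prime] y by simp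
qed

lemma vclose_0_iff_fraction:
  assumes x: "x \<in> Kfield"
  shows "vclose \<pi> x 0 \<longleftrightarrow> (\<exists>a\<in>OK. \<exists>b\<in>OK. \<not> dvdO \<pi> b \<and> x = a / b)"
proof
  assume "vclose \<pi> x 0"
  show "\<exists>a\<in>OK. \<exists>b\<in>OK. \<not> dvdO \<pi> b \<and> x = a / b"
  proof (cases "x = 0")
    case True
    then show ?thesis using primeO_not_dvd_1[OF prime] by (intro bexI[of _ 0] bexI[of _ 1]) auto
  next
    case False
    then obtain u v where uv: "u \<in> OK" "v \<in> OK" "\<not> dvdO \<pi> v" "x = \<pi> powi (ordK \<pi> x) * u / v"
      using has_ord_ordK[OF x] by (auto simp: has_ord_def)
    have "ordK \<pi> x \<ge> 0" using \<open>vclose \<pi> x 0\<close> False by (simp add: vclose_def)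
    then have "\<pi> powi (ordK \<pi> x) = \<pi> ^ nat (ordK \<pi> x)" by (metis power_int_of_nat nat_0_le)
    then have "x = (\<pi> ^ nat (ordK \<pi> x) * u) / v" using uv by simp
    moreover have "\<pi> ^ nat (ordK \<pi> x) * u \<in> OK" using uv primeO_OK[OF prime] by (intro OK_mult OK_power)
    ultimately show ?thesis using uv by blast
  qed
next
  assume "\<exists>a\<in>OK. \<exists>b\<in>OK. \<not> dvdO \<pi> b \<and> x = a / b"
  then obtain a b where ab: "a \<in> OK" "b \<in> OK" "\<not> dvdO \<pi> b" "x = a / b" by blast
  show "vclose \<pi> x 0"
  proof (cases "a = 0")
    case False
    then obtain k u where ku: "u \<in> OK" "\<not> dvdO \<pi> u" "a = \<pi> ^ k * u"
      using OK_prime_power_factor[OF prime ab(1)] by blast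
    have "has_ord \<pi> x (int k)" unfolding has_ord_def using ku ab by (intro bexI[of _ u] bexI[of _ b]) auto
    then show ?thesis using ordK_eqI by (simp add: vclose_def)
  qed (use ab in simp)
qed

lemma vclose_add_0: "x \<in> Kfield \<Longrightarrow> y \<in> Kfield \<Longrightarrow> vclose \<pi> x 0 \<Longrightarrow> vclose \<pi> y 0 \<Longrightarrow> vclose \<pi> (x + y) 0"
proof -
  assume xy: "x \<in> Kfield" "y \<in> Kfield" "vclose \<pi> x 0" "vclose \<pi> y 0"
  then obtain a b c d where "a \<in> OK" "b \<in> OK" "\<not> dvdO \<pi> b" "x = a / b"
      "c \<in> OK" "d \<in> OK" "\<not> dvdO \<pi> d" "y = c / d" using vclose_0_iff_fraction by meson
  moreover have "b \<noteq> 0" "d \<noteq> 0" using calculation by auto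
  ultimately have "x + y = (a * d + c * b) / (b * d)" "a * d + c * b \<in> OK" "b * d \<in> OK" "\<not> dvdO \<pi> (b * d)"
    using primeO_dvd_mult[OF prime] by (auto simp: field_simps intro: OK_add OK_mult)
  then show ?thesis using vclose_0_iff_fraction[of "x + y"] Kfield_add xy by blast
qed

lemma vclose_shift: "x \<in> Kfield \<Longrightarrow> vclose \<pi> x m \<longleftrightarrow> vclose \<pi> (x * \<pi> powi (- m)) 0"
proof (cases "x = 0")
  case False
  assume x: "x \<in> Kfield"
  have "ordK \<pi> (x * \<pi> powi (- m)) = ordK \<pi> x - m"
    using ordK_mult[of x "\<pi> powi (- m)"] ordK_powi[of "- m"] x False primeO_nonzero[OF prime]
      Kfield_powi OK_Kfield[OF primeO_OK[OF prime]]
    by simp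
  then show ?thesis using False primeO_nonzero[OF prime] by (simp add: vclose_def)
qed simp

lemma vclose_add: "x \<in> Kfield \<Longrightarrow> y \<in> Kfield \<Longrightarrow> vclose \<pi> x m \<Longrightarrow> vclose \<pi> y m \<Longrightarrow> vclose \<pi> (x + y) m"
proof -
  assume xy: "x \<in> Kfield" "y \<in> Kfield" "vclose \<pi> x m" "vclose \<pi> y m"
  have k: "\<pi> powi (- m) \<in> Kfield" using Kfield_powi OK_Kfield[OF primeO_OK[OF prime]] by blast
  have "vclose \<pi> (x * \<pi> powi (- m) + y * \<pi> powi (- m)) 0"
    using xy vclose_shift k by (intro vclose_add_0) (auto intro: Kfield_mult)
  then show ?thesis using vclose_shift[of "x + y"] xy Kfield_add by (simp add: distrib_right)
qed

lemma vclose_diff: "x \<in> Kfield \<Longrightarrow> y \<in> Kfield \<Longrightarrow> vclose \<pi> x m \<Longrightarrow> vclose \<pi> y m \<Longrightarrow> vclose \<pi> (x - y) m"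
  using vclose_add[of x "- y" m] vclose_uminus[of y m] Kfield_uminus[of y] by simp

lemma vclose_add3:
  assumes "x \<in> Kfield" "y \<in> Kfield" "z \<in> Kfield" "vclose \<pi> x m" "vclose \<pi> y m" "vclose \<pi> z m"
  shows "vclose \<pi> (x + y + z) m"
  using assms vclose_add Kfield_add by metis

lemma ordK_add_eq_left:
  assumes "x \<in> Kfield" "y \<in> Kfield" "x \<noteq> 0" "ordK \<pi> x < m" "vclose \<pi> y m"
  shows "x + y \<noteq> 0 \<and> ordK \<pi> (x + y) = ordK \<pi> x"
proof -
  have "x + y \<noteq> 0"
  proof
    assume "x + y = 0"
    then have "y = - x" by (simp add: add.commute eq_neg_iff_add_eq_0)
    then show False using assms ordK_uminus[of x] by (auto simp: vclose_def)
  qed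
  have a: "vclose \<pi> (x + y) (ordK \<pi> x)"
    using vclose_add[of x y "ordK \<pi> x"] assms vclose_mono[of \<pi> y m "ordK \<pi> x"] by (simp add: vclose_def)
  have "vclose \<pi> x (min (ordK \<pi> (x + y)) m)"
    using vclose_diff[of "x + y" y "min (ordK \<pi> (x + y)) m"] assms Kfield_add[of x y]
      vclose_mono[of \<pi> y m] vclose_ordK[of \<pi> "x + y"] vclose_mono[of \<pi> "x + y" "ordK \<pi> (x + y)"] by simp
  then have "ordK \<pi> x \<ge> min (ordK \<pi> (x + y)) m" using assms by (simp add: vclose_def)
  then show ?thesis using a assms \<open>x + y \<noteq> 0\<close> by (simp add: vclose_def)
qed

lemma ordK_add_eq_min:
  assumes "a \<in> Kfield" "b \<in> Kfield" "a \<noteq> 0" "b \<noteq> 0" "ordK \<pi> a \<noteq> ordK \<pi> b"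
  shows "a + b \<noteq> 0 \<and> ordK \<pi> (a + b) = min (ordK \<pi> a) (ordK \<pi> b)"
proof (cases "ordK \<pi> a < ordK \<pi> b")
  case True
  then show ?thesis using ordK_add_eq_left[of a b "ordK \<pi> b"] vclose_ordK assms by simp
next
  case False
  then have "ordK \<pi> b < ordK \<pi> a" using assms by simp
  then show ?thesis using ordK_add_eq_left[of b a "ordK \<pi> a"] vclose_ordK assms
    by (simp add: add.commute)
qed

end

lemma primeO_dvd_primeO_unit:
  assumes \<pi>: "primeO \<pi>" and l: "primeO l" and "dvdO \<pi> l"
  shows "\<exists>k m. l = \<pi> * k \<and> k \<in> OK \<and> m \<in> OK \<and> k * m = 1"
proof -
  obtain k where k: "k \<in> OK" "l = \<pi> * k" using \<open>dvdO \<pi> l\<close> by (auto simp: dvdO_def)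
  have "dvdO l (\<pi> * k)" using k dvdO_refl by simp
  then have "dvdO l \<pi> \<or> dvdO l k" using primeO_dvd_mult[OF l primeO_OK[OF \<pi>] k(1)] by blast
  moreover have "\<not> dvdO l k"
  proof
    assume "dvdO l k"
    then obtain j where j: "j \<in> OK" "k = l * j" by (auto simp: dvdO_def)
    then have "l * 1 = l * (\<pi> * j)" using k(2) by (metis mult.left_commute mult_1_right)
    then have "\<pi> * j = 1" using primeO_nonzero[OF l] by simp
    then have "inverse \<pi> = j" by (metis inverse_unique)
    then show False using \<pi> j(1) by (simp add: primeO_def)
  qed
  ultimately obtain m where m: "m \<in> OK" "\<pi> = l * m" by (auto simp: dvdO_def)
  then have "l * 1 = l * (k * m)" using k(2) by (metis mult.assoc mult.commute mult_1_right)
  then have "k * m = 1" using primeO_nonzero[OF l] by simp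
  then show ?thesis using k m by blast
qed

lemma has_ord_associated:
  assumes "l = \<pi> * k" "k \<in> OK" "m \<in> OK" "k * m = 1" "has_ord l x n"
  shows "has_ord \<pi> x n"
proof -
  obtain u v where uv: "u \<in> OK" "v \<in> OK" "\<not> dvdO l u" "\<not> dvdO l v" "x = l powi n * u / v"
    using assms(5) by (auto simp: has_ord_def)
  have "inverse k = m" using assms(4) by (metis inverse_unique)
  then have kn: "k powi n \<in> OK" and kmn: "k powi (- n) \<in> OK"
    using assms(2,3) by (auto simp: power_int_def intro: OK_power)
  have "k \<noteq> 0" using assms(4) by auto
  then have inv: "k powi (- n) * k powi n = 1" by (simp add: power_int_minus)
  have x: "x = \<pi> powi n * (k powi n * u) / v" using uv(5) assms(1) by (simp add: power_int_mult_distrib)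
  have "\<pi> = l * m" using assms(1,4) by (simp add: mult.assoc)
  then have l\<pi>: "dvdO l \<pi>" using assms(3) by (simp add: dvdO_triv_left)
  have "\<not> dvdO \<pi> (k powi n * u)"
  proof
    assume "dvdO \<pi> (k powi n * u)"
    then have "dvdO \<pi> (k powi (- n) * (k powi n * u))" using dvdO_mult_left kmn by blast
    then have "dvdO \<pi> u" using inv by (simp add: mult.assoc[symmetric])
    then show False using dvdO_trans[OF l\<pi>] uv(3) by blast
  qed
  moreover have "\<not> dvdO \<pi> v" using dvdO_trans[OF l\<pi>] uv(4) by blast
  moreover have "k powi n * u \<in> OK" using kn uv by (simp add: OK_mult)
  ultimately show ?thesis unfolding has_ord_def using x uv(2) by blast
qed

lemma vclose_associated:
  assumes \<pi>: "primeO \<pi>" and l: "primeO l" and "dvdO \<pi> l" and x: "x \<in> Kfield"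
  shows "vclose \<pi> x m \<longleftrightarrow> vclose l x m"
proof -
  obtain k k' where kk': "l = \<pi> * k" "k \<in> OK" "k' \<in> OK" "k * k' = 1"
    using primeO_dvd_primeO_unit[OF \<pi> l \<open>dvdO \<pi> l\<close>] by blast
  have "ordK \<pi> x = ordK l x" if "x \<noteq> 0"
    using ordK_eqI[OF \<pi> has_ord_associated[OF kk' has_ord_ordK[OF l x that]]] .
  then show ?thesis by (cases "x = 0") (auto simp: vclose_def)
qed

section \<open>Hensel's lemma for square roots\<close>

definition newton :: "complex \<Rightarrow> complex \<Rightarrow> complex" where
  "newton A x = x - (x^2 - A) * inverse (2 * x)"

context
  fixes \<pi> assumes prime: "primeO \<pi>"
begin

lemma vcauchy_of_steps:
  assumes f: "\<And>n. f n \<in> Kfield" and step: "\<And>n. vclose \<pi> (f (Suc n) - f n) (b + int n)"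
  shows "vcauchy \<pi> f"
proof -
  have diff: "vclose \<pi> (f j - f i) (b + int i)" if "i \<le> j" for i j
    using that
  proof (induction j)
    case (Suc j)
    show ?case
    proof (cases "i = Suc j")
      case False
      then have "i \<le> j" using Suc by simp
      have "vclose \<pi> (f (Suc j) - f j) (b + int i)"
        using vclose_mono[OF step[of j]] \<open>i \<le> j\<close> by simp
      then have "vclose \<pi> ((f (Suc j) - f j) + (f j - f i)) (b + int i)"
        by (intro vclose_add[OF prime _ _ _ Suc.IH[OF \<open>i \<le> j\<close>]]) (simp_all add: f Kfield_diff)
      then show ?thesis by simp
    qed simp
  qed simp
  have "vclose \<pi> (f i - f j) m" if "nat (m - b) \<le> i" "nat (m - b) \<le> j" for i j m
  proof (cases "i \<le> j")
    case True
    then have "vclose \<pi> (- (f j - f i)) m"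
      using vclose_uminus[OF prime _ vclose_mono[OF diff[OF True]]] that f by (simp add: Kfield_diff)
    then show ?thesis by simp
  next
    case False
    then show ?thesis using vclose_mono[OF diff[of j i]] that by simp
  qed
  then show ?thesis unfolding vcauchy_def by blast
qed

lemma newton_step:
  assumes A: "A \<in> Kfield" and x: "x \<in> Kfield" "x \<noteq> 0" "ordK \<pi> x = a"
    and c: "ordK \<pi> 2 \<le> c" "0 \<le> c" and n: "0 \<le> n"
    and E: "vclose \<pi> (x^2 - A) (2 * a + 2 * c + 1 + n)"
  shows "newton A x \<in> Kfield \<and> newton A x \<noteq> 0 \<and> ordK \<pi> (newton A x) = a \<and>
         vclose \<pi> (newton A x - x) (a + c + 1 + n) \<and>
         vclose \<pi> ((newton A x)^2 - A) (2 * a + 2 * c + 1 + (n + 1))"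
proof -
  define e where "e = x^2 - A"
  define i where "i = inverse (2 * x)"
  have eK: "e \<in> Kfield" and iK: "i \<in> Kfield" using A x by (auto simp: e_def i_def intro!: Kfield_closed)
  have "ordK \<pi> (2 * x) = ordK \<pi> 2 + a" using ordK_mult[OF prime, of 2 x] x by simp
  then have "ordK \<pi> i = - ordK \<pi> 2 - a"
    using ordK_inverse[OF prime, of "2 * x"] x by (simp add: i_def Kfield_mult)
  then have vi: "vclose \<pi> i (- c - a)" using c x by (simp add: vclose_def i_def)
  have vd: "vclose \<pi> (e * i) (a + c + 1 + n)"
    using vclose_mult[OF prime eK iK _ vi, of "2 * a + 2 * c + 1 + n"] E by (simp add: e_def algebra_simps)
  have d: "newton A x = x + (- (e * i))" by (simp add: newton_def e_def i_def)
  have dK: "- (e * i) \<in> Kfield" using eK iK by (auto intro!: Kfield_closed)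
  have vd': "vclose \<pi> (- (e * i)) (a + c + 1 + n)"
    using vclose_uminus[OF prime _ vd] eK iK by (simp add: Kfield_closed)
  then have "vclose \<pi> (- (e * i)) (a + 1)" using vclose_mono c n by simp
  then have nz: "newton A x \<noteq> 0 \<and> ordK \<pi> (newton A x) = a"
    unfolding d using ordK_add_eq_left[OF prime x(1) dK x(2), of "a + 1"] x(3) by simp
  have "(newton A x)^2 - A = (e * i)^2"
    using x(2) by (simp add: newton_def e_def i_def field_simps power2_eq_square)
  moreover have "vclose \<pi> ((e * i)^2) (2 * (a + c + 1 + n))"
    using vclose_power2[OF prime _ vd] eK iK by (simp add: Kfield_mult)
  ultimately have "vclose \<pi> ((newton A x)^2 - A) (2 * a + 2 * c + 1 + (n + 1))"
    using vclose_mono c n by fastforce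
  moreover have "newton A x \<in> Kfield" unfolding d using Kfield_add[OF x(1) dK] .
  ultimately show ?thesis using nz vd' by (simp add: d)
qed

text \<open>The hypothesis on w0 is the usual Hensel condition
  ord(w0^2 - A) > 2 ord(f'(w0)) = 2 ord(2 w0); every Newton step gains at least one unit of precision.\<close>
lemma hensel_sqrt:
  assumes A: "A \<in> Kfield" and w0: "w0 \<in> Kfield" "w0 \<noteq> 0"
    and c: "ordK \<pi> 2 \<le> c" "0 \<le> c"
    and E: "vclose \<pi> (w0^2 - A) (2 * ordK \<pi> w0 + 2 * c + 1)"
  shows "\<exists>w. (\<forall>n. w n \<in> Kfield) \<and> vcauchy \<pi> w \<and> vnull \<pi> (\<lambda>n. (w n)^2 - A) \<and>
     (\<forall>n. w n \<noteq> 0 \<and> ordK \<pi> (w n) = ordK \<pi> w0)"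
proof -
  define a where "a = ordK \<pi> w0"
  define ws where "ws n = (newton A ^^ n) w0" for n
  have inv: "ws n \<in> Kfield \<and> ws n \<noteq> 0 \<and> ordK \<pi> (ws n) = a \<and>
      vclose \<pi> ((ws n)^2 - A) (2 * a + 2 * c + 1 + int n)" for n
  proof (induction n)
    case 0
    then show ?case using w0 E by (simp add: ws_def a_def)
  next
    case (Suc n)
    then show ?case using newton_step[OF A _ _ _ c, of "ws n" a "int n"] by (simp add: ws_def add.assoc)
  qed
  have "vcauchy \<pi> ws"
  proof (rule vcauchy_of_steps)
    show "vclose \<pi> (ws (Suc n) - ws n) (a + c + 1 + int n)" for n
      using newton_step[OF A _ _ _ c, of "ws n" a "int n"] inv[of n] by (simp add: ws_def)
  qed (use inv in blast)
  moreover have "vnull \<pi> (\<lambda>n. (ws n)^2 - A)"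
  proof -
    have "vclose \<pi> ((ws i)^2 - A) m" if "nat (m - (2 * a + 2 * c + 1)) \<le> i" for i m
    proof (rule vclose_mono)
      show "vclose \<pi> ((ws i)^2 - A) (2 * a + 2 * c + 1 + int i)" using inv[of i] by blast
    qed (use that in linarith)
    then show ?thesis unfolding vnull_def by blast
  qed
  ultimately show ?thesis using inv unfolding a_def by blast
qed

end

section \<open>Rational primes in O_K\<close>

lemma Legendre_values: "Legendre a p \<in> {-1, 0, 1}"
  by (simp add: Legendre_def)

lemma Legendre_eq_1_imp_square: "Legendre a p = 1 \<Longrightarrow> \<exists>y. [y^2 = a] (mod p)"
  unfolding Legendre_def QuadRes_def by (auto split: if_splits)

lemma cong_sign_values_eq:
  fixes l :: nat
  assumes "2 < l" "x \<in> {-1, 0, 1::int}" "y \<in> {-1, 0, 1::int}" "[x = y] (mod int l)"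
  shows "x = y"
proof (rule ccontr)
  assume "x \<noteq> y"
  have "int l dvd (x - y)" using assms(4) by (simp add: cong_iff_dvd_diff)
  with \<open>x \<noteq> y\<close> have "int l \<le> \<bar>x - y\<bar>" using dvd_imp_le_int[of "x - y" "int l"] by simp
  moreover have "\<bar>x - y\<bar> < int l" using assms by auto
  ultimately show False by simp
qed

context
  fixes l :: nat assumes l: "prime l" "2 < l"
begin

lemma Legendre_mult: "Legendre (a * b) (int l) = Legendre a (int l) * Legendre b (int l)"
proof -
  have "[Legendre (a * b) (int l) = (a * b) ^ ((l - 1) div 2)] (mod int l)"
    by (rule euler_criterion[OF l])
  moreover have "[a ^ ((l - 1) div 2) * b ^ ((l - 1) div 2) = Legendre a (int l) * Legendre b (int l)] (mod int l)"
    using euler_criterion[OF l, of a] euler_criterion[OF l, of b] by (simp add: cong_mult cong_sym)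
  ultimately have "[Legendre (a * b) (int l) = Legendre a (int l) * Legendre b (int l)] (mod int l)"
    by (simp add: power_mult_distrib cong_trans)
  moreover have "Legendre a (int l) * Legendre b (int l) \<in> {-1, 0, 1}"
    using Legendre_values[of a "int l"] Legendre_values[of b "int l"] by auto
  ultimately show ?thesis using cong_sign_values_eq[OF l(2) Legendre_values] by metis
qed

lemma Legendre_minus_one: "Legendre (-1) (int l) = (-1) ^ ((l - 1) div 2)"
proof -
  have "(-1::int) ^ ((l - 1) div 2) \<in> {-1, 0, 1}" by (cases "even ((l - 1) div 2)") auto
  then show ?thesis by (rule cong_sign_values_eq[OF l(2) Legendre_values _ euler_criterion[OF l]])
qed

end

lemma prime_7: "prime (7::nat)"
proof -
  have "{2..<7} = {2, 3, 4, 5, 6 :: nat}" by auto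
  then show ?thesis by (simp add: prime_nat_iff')
qed

lemma prime_mod_7_nonzero: "prime l \<Longrightarrow> l \<noteq> 7 \<Longrightarrow> l mod 7 \<noteq> (0::nat)"
  using primes_dvd_imp_eq[OF prime_7, of l] mod_0_imp_dvd[of l 7] by auto

lemma Legendre_7:
  assumes "prime l" "l \<noteq> 7"
  shows "Legendre (int l) 7 = (if l mod 7 \<in> {1, 2, 4} then 1 else -1)"
proof -
  have "l mod 7 \<in> {1, 2, 3, 4, 5, 6}" using prime_mod_7_nonzero[OF assms] by auto
  moreover have "[Legendre (int l) 7 = (int (l mod 7)) ^ 3] (mod 7)"
    using euler_criterion[of 7 "int l"] cong_pow[of "int l" "int (l mod 7)" 7 3]
    by (simp add: cong_def zmod_int)
  moreover note Legendre_values[of "int l" 7]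
  ultimately show ?thesis by (auto simp: cong_def)
qed

lemma Legendre_minus_7:
  assumes "prime l" "2 < l" "l \<noteq> 7"
  shows "Legendre (-7) (int l) = Legendre (int l) 7"
proof -
  define h where "h = (l - 1) div 2"
  have qr: "Legendre 7 (int l) * Legendre (int l) 7 = (-1) ^ (3 * h)"
    using Quadratic_Reciprocity[of 7 l] assms by (simp add: h_def)
  have "Legendre (int l) 7 * Legendre (int l) 7 = 1" using Legendre_7[OF assms(1,3)] by simp
  then have "Legendre 7 (int l) = (-1) ^ (3 * h) * Legendre (int l) 7"
    using arg_cong[OF qr, of "\<lambda>x. x * Legendre (int l) 7"] by (simp add: mult.assoc)
  moreover have "Legendre (-7) (int l) = Legendre (-1) (int l) * Legendre 7 (int l)"
    using Legendre_mult[OF assms(1,2), of "-1" 7] by simp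
  moreover have "Legendre (-1) (int l) = (-1) ^ h"
    using Legendre_minus_one[OF assms(1,2)] by (simp add: h_def)
  ultimately have "Legendre (-7) (int l) = (-1) ^ h * (-1) ^ (3 * h) * Legendre (int l) 7" by simp
  also have "(-1::int) ^ h * (-1) ^ (3 * h) = 1" by (simp add: power_add[symmetric])
  finally show ?thesis by simp
qed

text \<open>x^2 + 7 = (x + sqrt(-7)) (x - sqrt(-7)), and l divides neither factor.\<close>
lemma not_primeO_if_mod_7:
  assumes "prime l" "2 < l" "l mod 7 \<in> {0, 1, 2, 4}"
  shows "\<not> primeO (of_nat l)"
proof
  assume prime: "primeO (of_nat l)"
  have "\<exists>x::int. [x^2 = -7] (mod int l)"
  proof (cases "l = 7")
    case True
    then show ?thesis by (intro exI[of _ 0]) (simp add: cong_def)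
  next
    case False
    with assms have "Legendre (-7) (int l) = 1"
      using Legendre_minus_7[OF assms(1,2) False] Legendre_7[OF assms(1) False]
        prime_mod_7_nonzero[OF assms(1) False] by auto
    then show ?thesis using Legendre_eq_1_imp_square by blast
  qed
  then obtain x where "int l dvd (x^2 + 7)" by (auto simp: cong_iff_dvd_diff)
  then have d: "dvdO (of_nat l) (of_int (x^2 + 7))"
    using dvdO_of_int[of "int l"] by (simp only: of_int_of_nat_eq)
  have e: "of_int (x^2 + 7) = (of_int (x - 1) + of_int 2 * om) * (of_int (x + 1) + of_int (-2) * om)"
    by (simp add: algebra_simps power2_eq_square om_mult_om_mult)
  have "dvdO (of_nat l) (of_int (x - 1) + of_int 2 * om) \<or> dvdO (of_nat l) (of_int (x + 1) + of_int (-2) * om)"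
    using primeO_dvd_mult[OF prime OK_I OK_I] d unfolding e by blast
  then have "int l dvd 2"
    using dvdO_of_int_coords[of "int l"] by (metis dvd_minus_iff of_int_of_nat_eq)
  then have "int l \<le> 2" using zdvd_imp_le[of "int l" 2] by simp
  then show False using assms(2) by simp
qed

lemma OK_sqrt_minus_one_mod_of_int:
  assumes "[a^2 = -1] (mod int l)"
  shows "\<exists>w0\<in>OK. dvdO (of_nat l) (w0^2 + 1)"
proof -
  have "int l dvd (a^2 + 1)" using assms by (simp add: cong_iff_dvd_diff)
  then have "dvdO (of_nat l) (of_int (a^2 + 1))"
    using dvdO_of_int[of "int l"] by (simp only: of_int_of_nat_eq)
  then have "dvdO (of_nat l) ((of_int a)^2 + 1)" by simp
  then show ?thesis using OK_of_int by blast
qed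

text \<open>If c^2 = 7 and 7 t = 1 modulo l, then c t sqrt(-7) is a square root of -1 modulo l.\<close>
lemma OK_sqrt_minus_one_mod_of_sqrt_7:
  assumes "prime l" "l \<noteq> 7" "[c^2 = 7] (mod int l)"
  shows "\<exists>w0\<in>OK. dvdO (of_nat l) (w0^2 + 1)"
proof -
  have "\<not> int l dvd 7"
  proof
    assume "int l dvd 7"
    then have "l dvd 7" by presburger
    then show False using primes_dvd_imp_eq[OF assms(1) prime_7] assms(2) by blast
  qed
  then have "coprime (int l) 7" using assms(1) by (simp add: prime_imp_coprime)
  then obtain t where t: "[7 * t = 1] (mod int l)"
    using cong_solve_coprime_int[of 7 "int l"] by (auto simp: coprime_commute)
  have "[7 * (c * t)^2 = c^2 * (7 * t^2)] (mod int l)" by (simp add: algebra_simps power2_eq_square)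
  moreover have "[c^2 * (7 * t^2) = (7 * t) * (7 * t)] (mod int l)"
    using cong_mult[OF assms(3) cong_refl, of "7 * t^2"] by (simp add: algebra_simps power2_eq_square)
  moreover have "[(7 * t) * (7 * t) = 1] (mod int l)" using cong_mult[OF t t] by simp
  ultimately have "[7 * (c * t)^2 = 1] (mod int l)" by (blast intro: cong_trans)
  then have "int l dvd (1 - 7 * (c * t)^2)" by (simp add: cong_iff_dvd_diff dvd_diff_commute)
  then have "dvdO (of_nat l) (of_int (1 - 7 * (c * t)^2))"
    using dvdO_of_int[of "int l"] by (simp only: of_int_of_nat_eq)
  moreover have "(of_int (c * t) * sqrtm7)^2 + 1 = of_int (1 - 7 * (c * t)^2)"
    by (simp add: power_mult_distrib sqrtm7_square)
  moreover have "of_int (c * t) * sqrtm7 \<in> OK" by (intro OK_mult OK_of_int sqrtm7_OK)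
  ultimately show ?thesis by metis
qed

text \<open>Since -7 is a non-square modulo l, one of -1 and 7 is a square.\<close>
lemma OK_sqrt_minus_one_mod_inert:
  assumes "prime l" "2 < l" "l mod 7 \<in> {3, 5, 6}"
  shows "\<exists>w0\<in>OK. dvdO (of_nat l) (w0^2 + 1)"
proof -
  have "l \<noteq> 7" using assms by auto
  then have "Legendre (-7) (int l) = -1"
    using Legendre_minus_7[OF assms(1,2)] Legendre_7[OF assms(1)] assms(3) by auto
  moreover have "Legendre (-7) (int l) = Legendre (-1) (int l) * Legendre 7 (int l)"
    using Legendre_mult[OF assms(1,2), of "-1" 7] by simp
  ultimately have "Legendre (-1) (int l) = 1 \<or> Legendre 7 (int l) = 1"
    using Legendre_values[of "-1" "int l"] Legendre_values[of 7 "int l"] by auto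
  then show ?thesis
    using Legendre_eq_1_imp_square OK_sqrt_minus_one_mod_of_int
      OK_sqrt_minus_one_mod_of_sqrt_7[OF assms(1) \<open>l \<noteq> 7\<close>] by blast
qed

section \<open>The primes above 2\<close>

lemma pi2_om: "pi2 = - om"
  by (simp add: pi2_def om_def field_simps)

lemma pi2bar_om: "pi2bar = om - 1"
  by (simp add: pi2bar_def om_def field_simps)

lemma pi2bar_cnj: "pi2bar = cnj pi2"
  by (simp add: pi2_om pi2bar_om cnj_om)

lemma two_eq_pi2_mult_pi2bar: "2 = pi2 * pi2bar"
  by (simp add: pi2_om pi2bar_om algebra_simps om_mult_om)

lemma pi2_OK: "pi2 \<in> OK"
  using OK_I[of 0 "-1"] by (simp add: pi2_om)

lemma pi2bar_OK: "pi2bar \<in> OK"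
  using OK_I[of "-1" 1] by (simp add: pi2bar_om)

text \<open>O_K / pi2 O_K = F_2, and a + b om reduces to a mod 2.\<close>
lemma dvdO_pi2_iff_even: "dvdO pi2 (of_int a + of_int b * om) \<longleftrightarrow> even a"
proof
  assume "dvdO pi2 (of_int a + of_int b * om)"
  then obtain k where k: "k \<in> OK" "of_int a + of_int b * om = pi2 * k" by (auto simp: dvdO_def)
  then obtain e f where ef: "k = of_int e + of_int f * om" by (auto simp: OK_iff)
  have "pi2 * k = of_int (2 * f) + of_int (- e - f) * om"
    by (simp add: ef pi2_om algebra_simps om_mult_om_mult)
  then have "a = 2 * f" using OK_coords_unique k(2) by metis
  then show "even a" by simp
next
  assume "even a"
  then obtain c where c: "a = 2 * c" by blast
  have "of_int a + of_int b * om = pi2 * (of_int (- b - c) + of_int c * om)"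
    by (simp add: c pi2_om algebra_simps om_mult_om_mult)
  then show "dvdO pi2 (of_int a + of_int b * om)" unfolding dvdO_def using OK_I by blast
qed

lemma dvdO_pi2_of_int_iff: "dvdO pi2 (of_int a) \<longleftrightarrow> even a"
  using dvdO_pi2_iff_even[of a 0] by simp

lemma primeO_pi2: "primeO pi2"
proof -
  have nz: "pi2 \<noteq> 0" using Im_om by (auto simp: pi2_om)
  have "\<not> dvdO pi2 1" using dvdO_pi2_of_int_iff[of 1] by simp
  then have inv: "inverse pi2 \<notin> OK" using nz unfolding dvdO_def by (metis right_inverse)
  have "dvdO pi2 a \<or> dvdO pi2 b" if ab: "a \<in> OK" "b \<in> OK" "dvdO pi2 (a * b)" for a b
  proof -
    obtain a1 a2 c1 c2 where a: "a = of_int a1 + of_int a2 * om" and b: "b = of_int c1 + of_int c2 * om"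
      using ab(1,2) OK_iff by blast
    have "a * b = of_int (a1 * c1 - 2 * a2 * c2) + of_int (a1 * c2 + a2 * c1 + a2 * c2) * om"
      by (simp add: a b algebra_simps om_mult_om_mult)
    then have "even (a1 * c1 - 2 * a2 * c2)" using ab(3) dvdO_pi2_iff_even by metis
    then have "even a1 \<or> even c1" by auto
    then show ?thesis using dvdO_pi2_iff_even a b by metis
  qed
  then show ?thesis unfolding primeO_def using pi2_OK nz inv by blast
qed

lemma primeO_pi2bar: "primeO pi2bar"
  unfolding pi2bar_cnj by (rule primeO_cnj[OF primeO_pi2])

lemma not_dvdO_pi2_pi2bar: "\<not> dvdO pi2 pi2bar"
  using dvdO_pi2_iff_even[of "-1" 1] by (simp add: pi2bar_om)

lemma ordK_pi2_pow2_mult_odd: "odd m \<Longrightarrow> ordK pi2 (of_int (2 ^ k * m)) = int k"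
proof -
  assume m: "odd m"
  have eq: "of_int (2 ^ k * m) = pi2 ^ k * (pi2bar ^ k * of_int m)"
    by (simp add: two_eq_pi2_mult_pi2bar power_mult_distrib)
  have "\<not> dvdO pi2 (pi2bar ^ k * of_int m)"
    using primeO_dvd_mult[OF primeO_pi2] primeO_dvd_power[OF primeO_pi2] pi2bar_OK OK_power
      not_dvdO_pi2_pi2bar dvdO_pi2_of_int_iff m by (metis OK_of_int)
  moreover have "pi2bar ^ k * of_int m \<in> OK" by (intro OK_mult OK_power pi2bar_OK OK_of_int)
  ultimately show ?thesis unfolding eq using ordK_power_mult_unit[OF primeO_pi2] by blast
qed

lemma ordK_pi2_of_int_odd: "odd a \<Longrightarrow> ordK pi2 (of_int a) = 0"
  using ordK_pi2_pow2_mult_odd[of a 0] by simp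

lemma ordK_pi2_2: "ordK pi2 2 = 1"
  using ordK_pi2_pow2_mult_odd[of 1 1] by simp

lemma ordK_pi2_4: "ordK pi2 4 = 2"
  using ordK_pi2_pow2_mult_odd[of 1 2] by simp

lemma vclose_pi2_of_int_iff: "vclose pi2 (of_int n) (int k) \<longleftrightarrow> 2 ^ k dvd n"
proof (cases "n = 0")
  case False
  obtain m where m: "n = 2 ^ multiplicity 2 n * m" "\<not> 2 dvd m"
    using multiplicity_decompose'[of n 2] False by auto
  then have "ordK pi2 (of_int n) = int (multiplicity 2 n)"
    using ordK_pi2_pow2_mult_odd by metis
  then show ?thesis
    using False power_dvd_iff_le_multiplicity[of n 2 k] by (simp add: vclose_def)
qed simp

lemma Cres_split: "Cres p q d z w = d * w\<^sup>2 - (d - of_nat p * z\<^sup>2) * (d - of_nat q * z\<^sup>2)"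
  unfolding Cres_def by (simp add: algebra_simps power2_eq_square power4_eq_xxxx)

lemma loc_solv_approx_point:
  assumes "loc_solv p q \<pi> d"
  obtains z w where "z \<in> Kfield" "w \<in> Kfield" "vclose \<pi> (Cres p q d z w) m"
proof -
  obtain z w where zw: "\<forall>n. z n \<in> Kfield \<and> w n \<in> Kfield" "vnull \<pi> (\<lambda>n. Cres p q d (z n) (w n))"
    using assms by (auto simp: loc_solv_def)
  have "\<exists>N. \<forall>i\<ge>N. vclose \<pi> (Cres p q d (z i) (w i)) m" using zw(2) by (simp add: vnull_def)
  then obtain N where "\<forall>i\<ge>N. vclose \<pi> (Cres p q d (z i) (w i)) m" by blast
  then show ?thesis using that zw(1) by blast
qed

lemma loc_solv_of_fixed_z:
  assumes \<pi>: "primeO \<pi>" and z: "z \<in> Kfield" and A: "A \<in> Kfield"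
    and w: "\<forall>n. w n \<in> Kfield" "vcauchy \<pi> w" "vnull \<pi> (\<lambda>n. (w n)^2 - A)"
    and eq: "\<And>n. Cres p q d z (w n) = - ((w n)^2 - A)"
  shows "loc_solv p q \<pi> d"
proof -
  have "vclose \<pi> (Cres p q d z (w i)) m" if "vclose \<pi> ((w i)^2 - A) m" for i m
    unfolding eq using vclose_uminus[OF \<pi> _ that] w(1) A by (simp add: Kfield_closed)
  then have "vnull \<pi> (\<lambda>n. Cres p q d z (w n))" using w(3) unfolding vnull_def by meson
  then show ?thesis unfolding loc_solv_def using w(1,2) z
    by (intro exI[of _ "\<lambda>n. z"] exI[of _ w]) (auto simp: vcauchy_def)
qed

lemma loc_solv_cnj: "loc_solv p q \<pi> d \<Longrightarrow> loc_solv p q (cnj \<pi>) (cnj d)"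
proof -
  assume "loc_solv p q \<pi> d"
  then obtain z w where zw: "\<forall>n. z n \<in> Kfield \<and> w n \<in> Kfield" "vcauchy \<pi> z" "vcauchy \<pi> w"
    "vnull \<pi> (\<lambda>n. Cres p q d (z n) (w n))" by (auto simp: loc_solv_def)
  have "\<forall>n. cnj (z n) \<in> Kfield \<and> cnj (w n) \<in> Kfield" using zw(1) Kfield_cnj by blast
  moreover have "vcauchy (cnj \<pi>) (\<lambda>n. cnj (z n))" "vcauchy (cnj \<pi>) (\<lambda>n. cnj (w n))"
    using zw(2,3) unfolding vcauchy_def by (metis complex_cnj_diff vclose_cnj)+
  moreover have "Cres p q (cnj d) (cnj z') (cnj w') = cnj (Cres p q d z' w')" for z' w'
    by (simp add: Cres_def)
  then have "vnull (cnj \<pi>) (\<lambda>n. Cres p q (cnj d) (cnj (z n)) (cnj (w n)))"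
    using zw(4) unfolding vnull_def by (simp add: vclose_cnj)
  ultimately show ?thesis unfolding loc_solv_def
    by (intro exI[of _ "\<lambda>n. cnj (z n)"] exI[of _ "\<lambda>n. cnj (w n)"]) blast
qed

lemma loc_solv_associated:
  assumes "primeO \<pi>" "primeO l" "dvdO \<pi> l" "d \<in> Kfield" "loc_solv p q l d"
  shows "loc_solv p q \<pi> d"
proof -
  obtain z w where zw: "\<forall>n. z n \<in> Kfield \<and> w n \<in> Kfield" "vcauchy l z" "vcauchy l w"
    "vnull l (\<lambda>n. Cres p q d (z n) (w n))" using assms(5) by (auto simp: loc_solv_def)
  have "vcauchy \<pi> z" "vcauchy \<pi> w"
    using zw(1,2,3) vclose_associated[OF assms(1-3)] unfolding vcauchy_def by (simp_all add: Kfield_closed)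
  moreover have "vnull \<pi> (\<lambda>n. Cres p q d (z n) (w n))"
    using zw(1,4) vclose_associated[OF assms(1-3)] Cres_Kfield assms(4) unfolding vnull_def by simp
  ultimately show ?thesis using zw(1) unfolding loc_solv_def by blast
qed

section \<open>No local points at pi2\<close>

lemma ordK_pi2_diff_odd_mult_square:
  assumes d: "d \<in> Kfield" "d \<noteq> 0" "odd (ordK pi2 d)" and z: "z \<in> Kfield" and r: "odd r"
  shows "d - of_nat r * z\<^sup>2 \<noteq> 0 \<and>
    ordK pi2 (d - of_nat r * z\<^sup>2) = (if z = 0 then ordK pi2 d else min (ordK pi2 d) (2 * ordK pi2 z))"
proof (cases "z = 0")
  case False
  have "r \<noteq> 0" using odd_pos[OF r] by simp
  then have rz: "- (of_nat r * z\<^sup>2) \<in> Kfield" "- (of_nat r * z\<^sup>2) \<noteq> 0"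
    using z False by (auto intro!: Kfield_closed)
  have "ordK pi2 (- (of_nat r * z\<^sup>2)) = ordK pi2 (of_nat r * z\<^sup>2)"
    using ordK_uminus[OF primeO_pi2] rz by (metis minus_minus neg_equal_0_iff_equal Kfield_uminus)
  also have "\<dots> = ordK pi2 (of_nat r) + ordK pi2 (z\<^sup>2)"
    using ordK_mult[OF primeO_pi2 Kfield_of_nat Kfield_power[OF z]] \<open>r \<noteq> 0\<close> False by simp
  also have "\<dots> = 2 * ordK pi2 z"
    using ordK_power[OF primeO_pi2 z False, of 2] ordK_pi2_of_int_odd[of "int r"] r by simp
  finally have "ordK pi2 (- (of_nat r * z\<^sup>2)) = 2 * ordK pi2 z" .
  moreover have "ordK pi2 d \<noteq> 2 * ordK pi2 z" using d by auto
  ultimately show ?thesis using ordK_add_eq_min[OF primeO_pi2 d(1) rz(1) d(2) rz(2)] False by simp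
qed (use d in simp)

text \<open>In d w^2 = (d - p z^2)(d - q z^2) both factors have the same valuation, so the right side
  has even valuation, while the left side has odd valuation.\<close>
lemma not_loc_solv_pi2_odd_ordK:
  assumes d: "d \<in> Kfield" "d \<noteq> 0" "odd (ordK pi2 d)" and pq: "odd p" "odd q"
  shows "\<not> loc_solv p q pi2 d"
proof
  assume "loc_solv p q pi2 d"
  then obtain z w where zw: "z \<in> Kfield" "w \<in> Kfield"
    and R: "vclose pi2 (Cres p q d z w) (2 * ordK pi2 d + 1)"
    by (rule loc_solv_approx_point)
  define mu where "mu = (if z = 0 then ordK pi2 d else min (ordK pi2 d) (2 * ordK pi2 z))"
  define F where "F = (d - of_nat p * z\<^sup>2) * (d - of_nat q * z\<^sup>2)"
  have "d - of_nat p * z\<^sup>2 \<in> Kfield" "d - of_nat q * z\<^sup>2 \<in> Kfield"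
    using d zw by (auto intro!: Kfield_closed)
  then have F: "F \<in> Kfield" "F \<noteq> 0" "ordK pi2 F = 2 * mu"
    using ordK_pi2_diff_odd_mult_square[OF d zw(1) pq(1)] ordK_pi2_diff_odd_mult_square[OF d zw(1) pq(2)]
      ordK_mult[OF primeO_pi2] unfolding F_def mu_def by (auto intro: Kfield_mult)
  have "mu \<le> ordK pi2 d" by (simp add: mu_def)
  have "d * w\<^sup>2 = F + Cres p q d z w" by (simp add: Cres_split F_def)
  moreover have "F + Cres p q d z w \<noteq> 0 \<and> ordK pi2 (F + Cres p q d z w) = ordK pi2 F"
    using ordK_add_eq_left[OF primeO_pi2 F(1) Cres_Kfield[OF d(1) zw] F(2), of "2 * ordK pi2 d + 1"]
      F R \<open>mu \<le> ordK pi2 d\<close>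
    by simp
  ultimately have "w \<noteq> 0" "ordK pi2 (d * w\<^sup>2) = 2 * mu" using F by auto
  moreover have "ordK pi2 (d * w\<^sup>2) = ordK pi2 d + 2 * ordK pi2 w"
    using ordK_mult[OF primeO_pi2 d(1) Kfield_power[OF zw(2)] d(2)]
      ordK_power[OF primeO_pi2 zw(2) \<open>w \<noteq> 0\<close>, of 2] \<open>w \<noteq> 0\<close> by simp
  ultimately show False using d(3) by presburger
qed

text \<open>pi2^3 = om + 2, so O_K / pi2^3 = Z/8 with om \<mapsto> -2, and the unit group of Z/8 has exponent 2.\<close>
lemma OK_unit_square_cong_1_pi2_cube:
  assumes u: "u \<in> OK" "\<not> dvdO pi2 u"
  shows "dvdO (pi2 ^ 3) (u\<^sup>2 - 1)"
proof -
  have cube: "pi2 ^ 3 = om + 2"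
    by (simp add: pi2_om power3_eq_cube om_mult_om_mult om_mult_om algebra_simps)
  obtain a b where ab: "u = of_int a + of_int b * om" using u(1) OK_iff by blast
  have "odd a" using u(2) dvdO_pi2_iff_even ab by auto
  define c where "c = a - 2 * b"
  have "odd c" using \<open>odd a\<close> by (simp add: c_def)
  then obtain k where "c = 2 * k + 1" by (metis oddE)
  have "even (k * (k + 1))" by simp
  then obtain m where "k * (k + 1) = 2 * m" by blast
  then have c2: "c\<^sup>2 - 1 = 8 * m" using \<open>c = 2 * k + 1\<close> by (simp add: power2_eq_square algebra_simps)
  have "u\<^sup>2 - 1 = pi2 ^ 3 * (of_int b * (u + of_int c)) + pi2 ^ 3 * (pi2bar ^ 3 * of_int m)"
  proof -
    have "u - of_int c = of_int b * pi2 ^ 3" by (simp add: ab c_def cube algebra_simps)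
    moreover have "of_int (c\<^sup>2 - 1) = pi2 ^ 3 * (pi2bar ^ 3 * of_int m)"
      by (simp add: c2 two_eq_pi2_mult_pi2bar[symmetric] power_mult_distrib[symmetric] mult.assoc[symmetric])
    moreover have "u\<^sup>2 - 1 = (u - of_int c) * (u + of_int c) + of_int (c\<^sup>2 - 1)"
      by (simp add: power2_eq_square algebra_simps)
    ultimately show ?thesis by (simp add: algebra_simps)
  qed
  moreover have "u + of_int c \<in> OK" "pi2bar ^ 3 * of_int m \<in> OK"
    using u(1) pi2bar_OK by (auto intro!: OK_add OK_mult OK_power)
  ultimately show ?thesis by (metis OK_mult OK_of_int dvdO_add dvdO_triv_left)
qed

lemma vclose_pi2_square_unit:
  assumes w: "w \<in> Kfield" "w \<noteq> 0" "ordK pi2 w = 0"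
  shows "vclose pi2 (w\<^sup>2 - 1) 3"
proof -
  obtain u v where uv: "u \<in> OK" "v \<in> OK" "\<not> dvdO pi2 u" "\<not> dvdO pi2 v" "w = u / v"
    using has_ord_ordK[OF primeO_pi2 w(1,2)] w(3) by (auto simp: has_ord_def)
  obtain a b where a: "a \<in> OK" "u\<^sup>2 - 1 = pi2 ^ 3 * a" and b: "b \<in> OK" "v\<^sup>2 - 1 = pi2 ^ 3 * b"
    using OK_unit_square_cong_1_pi2_cube uv by (metis dvdO_def)
  have "v \<noteq> 0" using uv by auto
  then have "w\<^sup>2 - 1 = ((u\<^sup>2 - 1) - (v\<^sup>2 - 1)) * inverse (v\<^sup>2)"
    by (simp add: uv(5) power_divide field_simps)
  then have "w\<^sup>2 - 1 = (pi2 ^ 3 * (a - b)) * inverse (v\<^sup>2)"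
    by (simp add: a(2) b(2) right_diff_distrib)
  moreover have "vclose pi2 (pi2 ^ 3 * (a - b)) 3"
    using vclose_power_mult[OF primeO_pi2, of "a - b" 3] a b by (simp add: OK_diff)
  moreover have "ordK pi2 (inverse (v\<^sup>2)) = 0"
    using ordK_inverse[OF primeO_pi2, of "v\<^sup>2"] ordK_power[OF primeO_pi2 OK_Kfield[OF uv(2)] \<open>v \<noteq> 0\<close>, of 2]
      ordK_unit[OF primeO_pi2 uv(2,4)] OK_Kfield[OF uv(2)] \<open>v \<noteq> 0\<close> by (simp add: Kfield_power)
  then have "vclose pi2 (inverse (v\<^sup>2)) 0" by (simp add: vclose_def)
  ultimately show ?thesis
    using vclose_mult[OF primeO_pi2, of "pi2 ^ 3 * (a - b)" "inverse (v\<^sup>2)" 3 0] a b uv(2)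
    by (simp add: OK_Kfield OK_mult OK_power OK_diff pi2_OK Kfield_inverse Kfield_power)
qed

lemma pi2_square_plus_odd:
  assumes y: "y \<in> Kfield" and c: "odd c" and yc: "vclose pi2 (y\<^sup>2 + of_int c) 3"
  shows "8 dvd (c + 1)"
proof -
  have "c \<noteq> 0" using c by auto
  have y2: "y\<^sup>2 = of_int (- c) + (y\<^sup>2 + of_int c)" by simp
  have "ordK pi2 (of_int (- c)) = 0" using ordK_pi2_of_int_odd[of "- c"] c by simp
  then have "y\<^sup>2 \<noteq> 0 \<and> ordK pi2 (y\<^sup>2) = 0"
    using ordK_add_eq_left[OF primeO_pi2 _ _ _ _ yc, of "of_int (- c)"] y \<open>c \<noteq> 0\<close>
    by (simp add: Kfield_closed flip: y2)
  then have "y \<noteq> 0" "ordK pi2 y = 0" using ordK_power[OF primeO_pi2 y, of 2] by auto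
  then have "vclose pi2 (y\<^sup>2 - 1) 3" using vclose_pi2_square_unit y by blast
  then have "vclose pi2 ((y\<^sup>2 + of_int c) - (y\<^sup>2 - 1)) 3"
    by (intro vclose_diff[OF primeO_pi2 _ _ yc]) (simp_all add: y Kfield_closed)
  then have "vclose pi2 (of_int (c + 1)) (int 3)" by simp
  then show ?thesis using vclose_pi2_of_int_iff[of "c + 1" 3] by simp
qed

context
  fixes p q :: nat and z w :: complex
  assumes p: "p mod 8 = 1" and q: "q = p + 2" and zw: "z \<in> Kfield" "w \<in> Kfield"
    and R: "vclose pi2 (Cres p q (-1) z w) 4"
begin

private lemma Cres_Kfield_minus_one: "Cres p q (-1) z w \<in> Kfield"
  using Cres_Kfield zw by (simp add: Kfield_uminus)

private lemma vclose_pi2_p_plus_q: "vclose pi2 (of_nat p + of_nat q) 2"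
proof -
  obtain k where "p = 8 * k + 1" using p by (metis mod_div_mult_eq add.commute mult.commute)
  then have "of_nat p + of_nat q = (of_int (2 ^ 2 * (4 * int k + 1)) :: complex)" by (simp add: q)
  then show ?thesis using vclose_pi2_of_int_iff[of "2 ^ 2 * (4 * int k + 1)" 2] by simp
qed

lemma no_pi2_point_z_nonunit:
  assumes z1: "vclose pi2 z 1"
  shows False
proof -
  have "vclose pi2 ((of_nat p + of_nat q) * z\<^sup>2) (2 + 2 * 1)"
    by (rule vclose_mult[OF primeO_pi2 _ _ vclose_pi2_p_plus_q vclose_power2[OF primeO_pi2 zw(1) z1]])
      (simp_all add: zw Kfield_closed)
  then have "vclose pi2 ((of_nat p + of_nat q) * z\<^sup>2) 3" using vclose_mono by simp
  moreover have "vclose pi2 (of_nat p * of_nat q * z ^ 4) (4 * 1)"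
    by (rule vclose_OK_mult[OF primeO_pi2 _ _ vclose_power4[OF primeO_pi2 zw(1) z1]])
      (simp_all add: zw Kfield_closed OK_mult)
  then have "vclose pi2 (of_nat p * of_nat q * z ^ 4) 3" using vclose_mono by simp
  moreover have "vclose pi2 (Cres p q (-1) z w) 3" using vclose_mono[OF R] by simp
  ultimately have X: "vclose pi2 ((of_nat p + of_nat q) * z\<^sup>2 + of_nat p * of_nat q * z ^ 4 + Cres p q (-1) z w) 3"
    using vclose_add3[OF primeO_pi2] zw Cres_Kfield_minus_one by (simp add: Kfield_closed)
  have "w\<^sup>2 + of_int 1 = - ((of_nat p + of_nat q) * z\<^sup>2 + of_nat p * of_nat q * z ^ 4 + Cres p q (-1) z w)"
    by (simp add: Cres_def algebra_simps power2_eq_square)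
  then have "vclose pi2 (w\<^sup>2 + of_int 1) 3"
    using vclose_uminus[OF primeO_pi2 _ X] zw Cres_Kfield_minus_one by (simp add: Kfield_closed)
  from pi2_square_plus_odd[OF zw(2) _ this] show False by simp
qed

lemma no_pi2_point_z_unit:
  assumes "z \<noteq> 0" "ordK pi2 z = 0"
  shows False
proof -
  obtain k where k: "p = 8 * k + 1" using p by (metis mod_div_mult_eq add.commute mult.commute)
  define f where "f = z\<^sup>2 - 1"
  have f: "f \<in> Kfield" "vclose pi2 f 3" using vclose_pi2_square_unit[OF zw(1) assms] zw
    by (auto simp: f_def Kfield_closed)
  have pf: "of_nat p * f \<in> Kfield" "vclose pi2 (of_nat p * f) 3"
    and qf: "of_nat q * f \<in> Kfield" "vclose pi2 (of_nat q * f) 3"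
    using f vclose_OK_mult[OF primeO_pi2 _ f(1,2)] by (auto simp: Kfield_closed)
  define a1 a2 where "a1 = (of_int (2 ^ 1 * (4 * int k + 1)) :: complex)"
    and "a2 = (of_int (2 ^ 2 * (2 * int k + 1)) :: complex)"
  have "ordK pi2 a1 = 1" using ordK_pi2_pow2_mult_odd[of "4 * int k + 1" 1] by (simp add: a1_def)
  moreover have "ordK pi2 a2 = 2" using ordK_pi2_pow2_mult_odd[of "2 * int k + 1" 2] by (simp add: a2_def)
  moreover have "a1 \<in> Kfield" "a2 \<in> Kfield" unfolding a1_def a2_def by (rule Kfield_of_int)+
  moreover have "a1 \<noteq> 0" "a2 \<noteq> 0" unfolding a1_def a2_def of_int_eq_0_iff by (simp; linarith)+
  ultimately have a: "a1 \<in> Kfield" "a1 \<noteq> 0" "ordK pi2 a1 = 1" "a2 \<in> Kfield" "a2 \<noteq> 0" "ordK pi2 a2 = 2"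
    by simp_all
  have "1 + of_nat p * z\<^sup>2 = a1 + of_nat p * f" by (simp add: a1_def f_def k algebra_simps)
  then have A1: "1 + of_nat p * z\<^sup>2 \<noteq> 0" "ordK pi2 (1 + of_nat p * z\<^sup>2) = 1"
    using ordK_add_eq_left[OF primeO_pi2 a(1) pf(1) a(2) _ vclose_mono[OF pf(2)], of 2] a(3) by simp_all
  have "1 + of_nat q * z\<^sup>2 = a2 + of_nat q * f" by (simp add: a2_def f_def k q algebra_simps)
  then have A2: "1 + of_nat q * z\<^sup>2 \<noteq> 0" "ordK pi2 (1 + of_nat q * z\<^sup>2) = 2"
    using ordK_add_eq_left[OF primeO_pi2 a(4) qf(1) a(5) _ qf(2)] a(6) by simp_all
  define F where "F = (1 + of_nat p * z\<^sup>2) * (1 + of_nat q * z\<^sup>2)"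
  have F: "F \<in> Kfield" "F \<noteq> 0" "ordK pi2 F = 3"
    using ordK_mult[OF primeO_pi2, of "1 + of_nat p * z\<^sup>2" "1 + of_nat q * z\<^sup>2"] A1 A2 zw
    by (auto simp: F_def Kfield_closed)
  have "- (w\<^sup>2) = F + Cres p q (-1) z w"
    by (simp add: F_def Cres_def algebra_simps power2_eq_square power4_eq_xxxx)
  then have "w \<noteq> 0" "ordK pi2 (- (w\<^sup>2)) = 3"
    using ordK_add_eq_left[OF primeO_pi2 F(1) Cres_Kfield_minus_one F(2), of 4] F(3) R by auto
  moreover have "ordK pi2 (- (w\<^sup>2)) = 2 * ordK pi2 w"
    using ordK_uminus[OF primeO_pi2 Kfield_power[OF zw(2)]] ordK_power[OF primeO_pi2 zw(2) \<open>w \<noteq> 0\<close>, of 2]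
      \<open>w \<noteq> 0\<close> by simp
  ultimately show False by presburger
qed

lemma no_pi2_point_z_nonintegral:
  assumes "z \<noteq> 0" "ordK pi2 z < 0"
  shows False
proof -
  define t where "t = inverse z"
  have tK: "t \<in> Kfield" using zw(1) by (simp add: t_def Kfield_inverse)
  have "ordK pi2 t \<ge> 1" using ordK_inverse[OF primeO_pi2 zw(1) assms(1)] assms(2) by (simp add: t_def)
  then have t1: "vclose pi2 t 1" by (simp add: vclose_def)
  have t4: "vclose pi2 (t ^ 4) 4" using vclose_power4[OF primeO_pi2 tK t1] by simp
  have "vclose pi2 (t ^ 4) 3" using vclose_mono[OF t4] by simp
  moreover have "vclose pi2 ((of_nat p + of_nat q) * t\<^sup>2) (2 + 2 * 1)"
    by (rule vclose_mult[OF primeO_pi2 _ _ vclose_pi2_p_plus_q vclose_power2[OF primeO_pi2 tK t1]])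
      (simp_all add: tK Kfield_closed)
  then have "vclose pi2 ((of_nat p + of_nat q) * t\<^sup>2) 3" using vclose_mono by simp
  moreover have "vclose pi2 (Cres p q (-1) z w * t ^ 4) (4 + 4)"
    by (rule vclose_mult[OF primeO_pi2 Cres_Kfield_minus_one _ R t4]) (simp add: tK Kfield_closed)
  then have "vclose pi2 (Cres p q (-1) z w * t ^ 4) 3" using vclose_mono by simp
  ultimately have X: "vclose pi2 (t ^ 4 + (of_nat p + of_nat q) * t\<^sup>2 + Cres p q (-1) z w * t ^ 4) 3"
    using vclose_add3[OF primeO_pi2] tK Cres_Kfield_minus_one by (simp add: Kfield_closed)
  have "(w * t\<^sup>2)\<^sup>2 + of_int (int (p * q)) =
      - (t ^ 4 + (of_nat p + of_nat q) * t\<^sup>2 + Cres p q (-1) z w * t ^ 4)"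
  proof -
    have "Cres p q (-1) z w * t ^ 4 = - (w * t\<^sup>2)\<^sup>2 - t ^ 4
        - (of_nat p + of_nat q) * (z * t)\<^sup>2 * t\<^sup>2 - of_nat p * of_nat q * (z * t) ^ 4"
      by (simp add: Cres_def algebra_simps power2_eq_square power4_eq_xxxx)
    moreover have "z * t = 1" using assms(1) by (simp add: t_def)
    ultimately show ?thesis by simp
  qed
  then have vc: "vclose pi2 ((w * t\<^sup>2)\<^sup>2 + of_int (int (p * q))) 3"
    using vclose_uminus[OF primeO_pi2 _ X] tK Cres_Kfield_minus_one by (simp add: Kfield_closed)
  have "odd p" using p mod_mod_cancel[of 2 8 p] by (simp add: odd_iff_mod_2_eq_one)
  then have "odd (int (p * q))" using q by simp
  moreover have "w * t\<^sup>2 \<in> Kfield" using zw tK by (simp add: Kfield_closed)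
  ultimately have "8 dvd (int (p * q) + 1)" using pi2_square_plus_odd vc by blast
  moreover obtain k where "p = 8 * k + 1" using p by (metis mod_div_mult_eq add.commute mult.commute)
  then have "int (p * q) + 1 = 8 * (8 * int k * int k + 4 * int k) + 4" by (simp add: q algebra_simps)
  then obtain M where "int (p * q) + 1 = 8 * M + 4" by blast
  ultimately show False by presburger
qed

end

lemma not_loc_solv_pi2_minus_one:
  assumes "p mod 8 = 1" "q = p + 2"
  shows "\<not> loc_solv p q pi2 (-1)"
proof
  assume "loc_solv p q pi2 (-1)"
  then obtain z w where zw: "z \<in> Kfield" "w \<in> Kfield" "vclose pi2 (Cres p q (-1) z w) 4"
    by (rule loc_solv_approx_point)
  show False
  proof (cases "z = 0")
    case True
    then show False using no_pi2_point_z_nonunit[OF assms zw] by simp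
  next
    case False
    consider "ordK pi2 z \<ge> 1" | "ordK pi2 z = 0" | "ordK pi2 z < 0" by linarith
    then show False
    proof cases
      case 1
      then show False using no_pi2_point_z_nonunit[OF assms zw] by (simp add: vclose_def)
    next
      case 2
      then show False using no_pi2_point_z_unit[OF assms zw False] by simp
    next
      case 3
      then show False using no_pi2_point_z_nonintegral[OF assms zw False] by simp
    qed
  qed
qed

section \<open>Local points\<close>

lemma loc_solv_p: "loc_solv p q \<pi> (of_nat p)"
  unfolding loc_solv_def
  by (intro exI[of _ "\<lambda>n. 1"] exI[of _ "\<lambda>n. 0"])
    (simp add: vcauchy_def vnull_def Cres_def algebra_simps power2_eq_square)

lemma loc_solv_q: "loc_solv p q \<pi> (of_nat q)"
  unfolding loc_solv_def
  by (intro exI[of _ "\<lambda>n. 1"] exI[of _ "\<lambda>n. 0"])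
    (simp add: vcauchy_def vnull_def Cres_def algebra_simps power2_eq_square)

text \<open>At a prime l of Z inert in K, the residue field has l^2 elements and contains a square
  root of -1, which lifts by Hensel's lemma to a point with z = 0 on C'_{-1}.\<close>
lemma loc_solv_inert_minus_one:
  assumes l: "primeO (of_nat l)" "prime l" "2 < l" "l mod 7 \<in> {3, 5, 6}"
  shows "loc_solv p q (of_nat l) (-1)"
proof -
  obtain w0 where w0: "w0 \<in> OK" "dvdO (of_nat l) (w0^2 + 1)"
    using OK_sqrt_minus_one_mod_inert[OF l(2-4)] by blast
  have "\<not> dvdO (of_nat l) w0"
  proof
    assume "dvdO (of_nat l) w0"
    then have "dvdO (of_nat l) ((w0^2 + 1) - w0 * w0)" using dvdO_mult_right w0 dvdO_diff by blast
    then show False using primeO_not_dvd_1[OF l(1)] by (simp add: power2_eq_square)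
  qed
  then have "w0 \<noteq> 0" "ordK (of_nat l) w0 = 0" using ordK_unit[OF l(1) w0(1)] by auto
  have "\<not> dvdO (of_nat l) 2"
  proof
    assume "dvdO (of_nat l) 2"
    then have "int l dvd 2" using dvdO_of_int_coords[of "int l" 2 0] by simp
    then show False using l(3) zdvd_imp_le[of "int l" 2] by simp
  qed
  then have "ordK (of_nat l) 2 \<le> 0" using ordK_unit[OF l(1) OK_numeral] by simp
  moreover obtain k where "k \<in> OK" "w0^2 + 1 = of_nat l * k" using w0(2) by (auto simp: dvdO_def)
  then have "vclose (of_nat l) (w0^2 - (-1)) (2 * ordK (of_nat l) w0 + 2 * 0 + 1)"
    using vclose_power_mult[OF l(1), of k 1] \<open>ordK (of_nat l) w0 = 0\<close> by simp
  ultimately obtain w where "\<forall>n. w n \<in> Kfield" "vcauchy (of_nat l) w" "vnull (of_nat l) (\<lambda>n. (w n)^2 - (-1))"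
    using hensel_sqrt[OF l(1) Kfield_uminus[OF Kfield_1] OK_Kfield[OF w0(1)] \<open>w0 \<noteq> 0\<close>] by blast
  then show ?thesis
    by (rule loc_solv_of_fixed_z[OF l(1) Kfield_0 Kfield_uminus[OF Kfield_1]]) (simp add: Cres_def)
qed

text \<open>With z = 1/2 and p = 4k + 3, w0 = 1/4 is an approximate root of w^2 = A:
  w0^2 - A is the integer (k + 2)^2.\<close>
lemma loc_solv_pi2_minus_one_mod_4:
  assumes "p mod 4 = 3" "q = p + 2"
  shows "loc_solv p q pi2 (-1)"
proof -
  obtain k where k: "p = 4 * k + 3" using assms(1) by (metis mod_div_mult_eq add.commute mult.commute)
  define A where "A = - (1 + (of_nat p + of_nat q) * (1/2)^2 + of_nat p * of_nat q * (1/2)^4 :: complex)"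
  have AK: "A \<in> Kfield" unfolding A_def by (auto intro!: Kfield_closed)
  have e: "(1/4::complex)^2 - A = of_int ((int k + 2)^2)"
    by (simp add: A_def k assms(2) field_simps power2_eq_square)
  have "vclose pi2 ((1/4::complex)^2 - A) 0" unfolding e using vclose_OK[OF primeO_pi2 OK_of_int] .
  moreover have "ordK pi2 (inverse 4) = - ordK pi2 4"
    by (rule ordK_inverse[OF primeO_pi2 Kfield_numeral]) simp
  then have "ordK pi2 (1/4) = -2" using ordK_pi2_4 by (simp add: inverse_eq_divide)
  ultimately have E: "vclose pi2 ((1/4::complex)^2 - A) (2 * ordK pi2 (1/4) + 2 * 1 + 1)"
    using vclose_mono by simp
  obtain w where w: "\<forall>n. w n \<in> Kfield" "vcauchy pi2 w" "vnull pi2 (\<lambda>n. (w n)^2 - A)"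
    using hensel_sqrt[OF primeO_pi2 AK _ _ _ _ E] ordK_pi2_2 by (auto simp: Kfield_closed)
  show ?thesis
    by (rule loc_solv_of_fixed_z[OF primeO_pi2 _ AK w, where z = "1/2"])
      (simp_all add: Cres_def A_def algebra_simps Kfield_closed)
qed

text \<open>The residual of C'_{-1} at (z, w) is -(w^2 - A) - (z^2 - Z0) (p + q + p q (z^2 + Z0)),
  whose second factor stays \<pi>-integral.\<close>
lemma loc_solv_minus_one_of_square_roots:
  fixes p q :: nat and Z0 P Q A :: complex
  defines "P \<equiv> of_nat p" and "Q \<equiv> of_nat q" and "A \<equiv> - (1 + (P + Q) * Z0 + P * Q * Z0^2)"
  assumes \<pi>: "primeO \<pi>" and Z0: "Z0 \<in> OK"
    and zs: "\<forall>n. zs n \<in> Kfield \<and> vclose \<pi> (zs n) 0" "vcauchy \<pi> zs" "vnull \<pi> (\<lambda>n. (zs n)^2 - Z0)"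
    and ws: "\<forall>n. ws n \<in> Kfield" "vcauchy \<pi> ws" "vnull \<pi> (\<lambda>n. (ws n)^2 - A)"
  shows "loc_solv p q \<pi> (-1)"
proof -
  have OKs: "P + Q \<in> OK" "P * Q \<in> OK" by (auto simp: P_def Q_def intro: OK_add OK_mult)
  have K: "Z0 \<in> Kfield" "A \<in> Kfield" using Z0 by (auto simp: A_def P_def Q_def OK_Kfield intro!: Kfield_closed)
  have point: "vclose \<pi> (Cres p q (-1) (zs i) (ws i)) m"
    if "vclose \<pi> ((ws i)^2 - A) m" "vclose \<pi> ((zs i)^2 - Z0) m" for i m
  proof -
    have zK: "zs i \<in> Kfield" "ws i \<in> Kfield" using zs ws by auto
    have "vclose \<pi> ((zs i)^2) 0" using vclose_power2[OF \<pi> zK(1)] zs(1) by fastforce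
    then have "vclose \<pi> ((zs i)^2 + Z0) 0"
      using vclose_add[OF \<pi> _ K(1) _ vclose_OK[OF \<pi> Z0]] zK by (simp add: Kfield_closed)
    then have B: "vclose \<pi> ((P + Q) + P * Q * ((zs i)^2 + Z0)) 0"
      using vclose_add[OF \<pi> _ _ vclose_OK[OF \<pi> OKs(1)] vclose_OK_mult[OF \<pi> OKs(2)]]
        zK K OKs by (simp add: Kfield_closed OK_Kfield)
    have "vclose \<pi> (((zs i)^2 - Z0) * ((P + Q) + P * Q * ((zs i)^2 + Z0))) m"
      using vclose_mult[OF \<pi> _ _ that(2) B] zK K OKs by (simp add: Kfield_closed OK_Kfield)
    moreover have "vclose \<pi> (- ((ws i)^2 - A)) m"
      using vclose_uminus[OF \<pi> _ that(1)] zK K by (simp add: Kfield_closed)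
    moreover have "Cres p q (-1) (zs i) (ws i)
        = - ((ws i)^2 - A) - ((zs i)^2 - Z0) * ((P + Q) + P * Q * ((zs i)^2 + Z0))"
      by (simp add: Cres_def A_def P_def Q_def algebra_simps power2_eq_square power4_eq_xxxx)
    ultimately show ?thesis
      using vclose_diff[OF \<pi>] zK K OKs by (simp add: Kfield_closed OK_Kfield)
  qed
  have "vnull \<pi> (\<lambda>n. Cres p q (-1) (zs n) (ws n))"
    unfolding vnull_def
  proof
    fix m
    obtain N1 N2 where "\<forall>i\<ge>N1. vclose \<pi> ((ws i)^2 - A) m" "\<forall>i\<ge>N2. vclose \<pi> ((zs i)^2 - Z0) m"
      using ws(3) zs(3) unfolding vnull_def by blast
    then show "\<exists>N. \<forall>i\<ge>N. vclose \<pi> (Cres p q (-1) (zs i) (ws i)) m"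
      by (intro exI[of _ "max N1 N2"]) (simp add: point)
  qed
  then show ?thesis unfolding loc_solv_def using zs ws by blast
qed

text \<open>For p = 5 (mod 8) no rational z works; instead z = sqrt(p + 28), a 2-adic unit since
  p + 28 = 1 (mod 8), and then w0 = 4 is a root of w^2 = -(1 + (p + q) z^2 + p q z^4) modulo 2^7.\<close>
lemma loc_solv_pi2_minus_one_mod_8:
  assumes "p mod 8 = 5" "q = p + 2"
  shows "loc_solv p q pi2 (-1)"
proof -
  obtain k where k: "p = 8 * k + 5" using assms(1) by (metis mod_div_mult_eq add.commute mult.commute)
  define Z0 where "Z0 = (of_nat p + 28 :: complex)"
  define A where "A = - (1 + (of_nat p + of_nat q) * Z0 + of_nat p * of_nat q * Z0^2)"
  have Z0: "Z0 \<in> OK" "Z0 \<in> Kfield" and AK: "A \<in> Kfield"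
    by (auto simp: Z0_def A_def OK_Kfield intro!: OK_add Kfield_closed)
  have ez: "1^2 - Z0 = of_int (2^3 * (- int k - 4))" by (simp add: Z0_def k)
  have Ez: "vclose pi2 (1^2 - Z0) (2 * ordK pi2 1 + 2 * 1 + 1)"
    unfolding ez using vclose_pi2_of_int_iff[of "2^3 * (- int k - 4)" 3] ordK_1[OF primeO_pi2] by simp
  obtain zs where zs: "\<forall>n. zs n \<in> Kfield" "vcauchy pi2 zs" "vnull pi2 (\<lambda>n. (zs n)^2 - Z0)"
      "\<forall>n. zs n \<noteq> 0 \<and> ordK pi2 (zs n) = ordK pi2 1"
    using hensel_sqrt[OF primeO_pi2 Z0(2) Kfield_1 _ _ _ Ez] ordK_pi2_2 by auto
  define M where "M = 301 + 966 * int k + 959 * int k^2 + 312 * int k^3 + 32 * int k^4"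
  have ew: "4^2 - A = of_int (2^7 * M)"
    by (simp add: M_def A_def Z0_def k assms(2) algebra_simps power2_eq_square power3_eq_cube power4_eq_xxxx)
  have Ew: "vclose pi2 (4^2 - A) (2 * ordK pi2 4 + 2 * 1 + 1)"
    unfolding ew ordK_pi2_4 using vclose_pi2_of_int_iff[of "2^7 * M" 7] by simp
  obtain ws where "\<forall>n. ws n \<in> Kfield" "vcauchy pi2 ws" "vnull pi2 (\<lambda>n. (ws n)^2 - A)"
    using hensel_sqrt[OF primeO_pi2 AK Kfield_numeral _ _ _ Ew] ordK_pi2_2 by auto
  moreover have "\<forall>n. zs n \<in> Kfield \<and> vclose pi2 (zs n) 0"
    using zs(1,4) ordK_1[OF primeO_pi2] by (simp add: vclose_def)
  ultimately show ?thesis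
    using loc_solv_minus_one_of_square_roots[OF primeO_pi2 Z0(1) _ zs(2,3), of ws p q]
    unfolding A_def by blast
qed

section \<open>The Selmer group\<close>

lemma arch_solv_always: "arch_solv p q d"
proof -
  have "Cres p q d 0 (csqrt d) = d * (csqrt d)\<^sup>2 - d\<^sup>2" by (simp add: Cres_def)
  also have "\<dots> = 0" by (simp only: power2_csqrt) (simp add: power2_eq_square)
  finally show ?thesis unfolding arch_solv_def by blast
qed

lemma OK_in_KS2:
  assumes "u \<in> OK" "u \<noteq> 0" "dvdO u (2 * of_nat p * of_nat q)"
  shows "u \<in> KS2 p q"
proof -
  have "ordK \<pi> u = 0" if "primeO \<pi>" "\<not> dvdO \<pi> (2 * of_nat p * of_nat q)" for \<pi>
    using ordK_unit[OF that(1) assms(1)] dvdO_trans[OF _ assms(3)] that(2) by blast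
  then show ?thesis using assms OK_Kfield unfolding KS2_def by auto
qed

lemma primeO_dvd_2pq_cases:
  assumes "primeO \<pi>" "dvdO \<pi> (2 * of_nat p * of_nat q)"
  shows "dvdO \<pi> pi2 \<or> dvdO \<pi> pi2bar \<or> dvdO \<pi> (of_nat p) \<or> dvdO \<pi> (of_nat q)"
proof -
  have "dvdO \<pi> (((pi2 * pi2bar) * of_nat p) * of_nat q)"
    using assms(2) unfolding two_eq_pi2_mult_pi2bar .
  then show ?thesis using primeO_dvd_mult[OF assms(1)] pi2_OK pi2bar_OK by (meson OK_mult OK_of_nat)
qed

lemma pi2_dvd_2pq: "dvdO pi2 (2 * of_nat p * of_nat q)"
  and pi2bar_dvd_2pq: "dvdO pi2bar (2 * of_nat p * of_nat q)"
  unfolding two_eq_pi2_mult_pi2bar dvdO_def using pi2_OK pi2bar_OK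
  by (auto simp: mult.assoc mult.left_commute intro!: bexI OK_mult)

lemma selmer_p:
  assumes "p \<noteq> 0"
  shows "selmer p q (of_nat p)"
proof -
  have "dvdO (of_nat p) (of_nat p * (2 * of_nat q))" by (rule dvdO_triv_left) (simp add: OK_mult)
  moreover have "of_nat p * (2 * of_nat q) = 2 * of_nat p * (of_nat q :: complex)" by simp
  ultimately have "dvdO (of_nat p) (2 * of_nat p * of_nat q)" by simp
  then show ?thesis
    unfolding selmer_def using assms by (auto intro!: OK_in_KS2 arch_solv_always loc_solv_p)
qed

lemma selmer_q:
  assumes "q \<noteq> 0"
  shows "selmer p q (of_nat q)"
proof -
  have "dvdO (of_nat q) (of_nat q * (2 * of_nat p))" by (rule dvdO_triv_left) (simp add: OK_mult)
  moreover have "of_nat q * (2 * of_nat p) = 2 * of_nat p * (of_nat q :: complex)" by simp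
  ultimately have "dvdO (of_nat q) (2 * of_nat p * of_nat q)" by simp
  then show ?thesis
    unfolding selmer_def using assms by (auto intro!: OK_in_KS2 arch_solv_always loc_solv_q)
qed

lemma not_selmer_odd_ordK:
  assumes "odd p" "odd q" "d \<in> KS2 p q" "odd (ordK pi2 d) \<or> odd (ordK pi2bar d)"
  shows "\<not> selmer p q d"
proof
  assume selmer: "selmer p q d"
  have d: "d \<in> Kfield" "d \<noteq> 0" using assms(3) by (auto simp: KS2_def)
  have "loc_solv p q pi2 d" "loc_solv p q pi2bar d"
    using selmer primeO_pi2 primeO_pi2bar pi2_dvd_2pq pi2bar_dvd_2pq by (auto simp: selmer_def)
  moreover have "loc_solv p q pi2 (cnj d)" if "loc_solv p q pi2bar d"
    using loc_solv_cnj[OF that] by (simp add: pi2bar_cnj)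
  moreover have "ordK pi2 (cnj d) = ordK pi2bar d"
    using ordK_cnj[of pi2bar d] by (simp add: pi2bar_cnj)
  ultimately show False
    using assms(1,2,4) not_loc_solv_pi2_odd_ordK d Kfield_cnj[OF d(1)] by fastforce
qed

text \<open>An odd prime l is inert in K iff l mod 7 \<in> {3, 5, 6}, and 3 is the only residue r
  with r and r + 2 both in this set.\<close>
lemma inert_twin_primes_mod_7:
  assumes "prime p" "prime q" "odd p" "q = p + 2" "primeO (of_nat p)" "primeO (of_nat q)"
  shows "p mod 7 = 3"
proof -
  have "2 < p" using prime_ge_2_nat[OF assms(1)] \<open>odd p\<close> by (cases "p = 2") auto
  have "p mod 7 \<notin> {0, 1, 2, 4}" using not_primeO_if_mod_7[OF assms(1) \<open>2 < p\<close>] assms(5) by metis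
  moreover have "2 < q" using \<open>2 < p\<close> assms(4) by simp
  then have "q mod 7 \<notin> {0, 1, 2, 4}" using not_primeO_if_mod_7[OF assms(2)] assms(6) by metis
  moreover have "q mod 7 = (p mod 7 + 2) mod 7" by (simp only: assms(4) mod_add_left_eq)
  moreover have "p mod 7 < 7" by simp
  then have "p mod 7 \<in> {0, 1, 2, 3, 4, 5, 6}" by auto
  ultimately show ?thesis by auto
qed

lemma loc_solv_pi2_minus_one_iff:
  assumes "odd p" "q = p + 2"
  shows "loc_solv p q pi2 (-1) \<longleftrightarrow> p mod 8 \<noteq> 1"
proof
  assume "p mod 8 \<noteq> 1"
  moreover have "p mod 8 mod 2 = 1" "p mod 8 mod 4 = p mod 4"
    using \<open>odd p\<close> by (simp_all add: mod_mod_cancel odd_iff_mod_2_eq_one)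
  moreover have "p mod 8 \<in> {0, 1, 2, 3, 4, 5, 6, 7}" by auto
  ultimately have "p mod 4 = 3 \<or> p mod 8 = 5" by auto
  then show "loc_solv p q pi2 (-1)"
    using loc_solv_pi2_minus_one_mod_4[OF _ assms(2)] loc_solv_pi2_minus_one_mod_8[OF _ assms(2)] by blast
qed (use not_loc_solv_pi2_minus_one[OF _ assms(2)] in blast)

lemma minus_one_in_KS2: "-1 \<in> KS2 p q"
proof (rule OK_in_KS2)
  show "dvdO (-1) (2 * of_nat p * of_nat q)"
    unfolding dvdO_def by (intro bexI[of _ "- (2 * of_nat p * of_nat q)"]) (auto intro!: OK_uminus OK_mult)
qed (auto intro: OK_uminus)

text \<open>At the inert primes p and q, -1 is always locally a point, and the two primes above 2 are
  exchanged by complex conjugation, so only pi2 matters.\<close>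
lemma selmer_minus_one_iff_loc_solv_pi2:
  assumes "prime p" "prime q" "odd p" "q = p + 2" and p: "primeO (of_nat p)" and q: "primeO (of_nat q)"
  shows "selmer p q (-1) \<longleftrightarrow> loc_solv p q pi2 (-1)"
proof
  assume pi2: "loc_solv p q pi2 (-1)"
  then have pi2bar: "loc_solv p q pi2bar (-1)" using loc_solv_cnj by (fastforce simp: pi2bar_cnj)
  have "2 < p" using prime_ge_2_nat[OF assms(1)] \<open>odd p\<close> by (cases "p = 2") auto
  moreover have "p mod 7 = 3" using inert_twin_primes_mod_7 assms by blast
  moreover have "q mod 7 = (p mod 7 + 2) mod 7" by (simp only: assms(4) mod_add_left_eq)
  then have "q mod 7 = 5" using calculation(2) by simp
  ultimately have "loc_solv p q (of_nat p) (-1)" "loc_solv p q (of_nat q) (-1)"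
    using loc_solv_inert_minus_one[OF p assms(1)] loc_solv_inert_minus_one[OF q assms(2)] assms(4)
    by simp_all
  then have "loc_solv p q \<pi> (-1)" if "primeO \<pi>" "dvdO \<pi> (2 * of_nat p * of_nat q)" for \<pi>
    using primeO_dvd_2pq_cases[OF that] loc_solv_associated[OF that(1)] primeO_pi2 primeO_pi2bar p q
      pi2 pi2bar by (meson Kfield_1 Kfield_uminus)
  then show "selmer p q (-1)"
    unfolding selmer_def using minus_one_in_KS2 arch_solv_always by blast
qed (use primeO_pi2 pi2_dvd_2pq in \<open>auto simp: selmer_def\<close>)

lemma mod_56_iff_mod_8:
  fixes p :: nat
  assumes "p mod 7 = 3" "odd p"
  shows "p mod 56 \<in> {3, 31, 45} \<longleftrightarrow> p mod 8 \<noteq> 1"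
proof -
  define r where "r = p mod 56"
  have r8: "r mod 8 = p mod 8" and r2: "r mod 2 = p mod 2" and r7: "r mod 7 = 3"
    using assms(1) by (simp_all add: r_def mod_mod_cancel)
  have "r = 7 * (r div 7) + 3" using r7 by (metis div_mult_mod_eq mult.commute)
  moreover have "r div 7 < 8" by (simp add: r_def less_mult_imp_div_less)
  then have "r div 7 \<in> {0, 1, 2, 3, 4, 5, 6, 7}" by auto
  ultimately have "r \<in> {3, 10, 17, 24, 31, 38, 45, 52}" by auto
  with r2 r8 assms(2) show ?thesis unfolding r_def[symmetric] by (auto simp: odd_iff_mod_2_eq_one)
qed

lemma selmer_minus_one_iff:
  assumes "prime p" "prime q" "odd p" "q = p + 2" "primeO (of_nat p)" "primeO (of_nat q)"
  shows "selmer p q (-1) \<longleftrightarrow> p mod 56 \<in> {3, 31, 45}"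
proof -
  have "p mod 7 = 3" using inert_twin_primes_mod_7 assms by blast
  then have "p mod 56 \<in> {3, 31, 45} \<longleftrightarrow> p mod 8 \<noteq> 1" using \<open>odd p\<close> by (rule mod_56_iff_mod_8)
  then show ?thesis
    using selmer_minus_one_iff_loc_solv_pi2[OF assms] loc_solv_pi2_minus_one_iff[OF assms(3,4)] by simp
qed

theorem proposition2p4:
  fixes p q :: nat
  assumes "prime p" and "prime q" and "odd p" and "odd q" and "q = p + 2"
    and "primeO (of_nat p)" and "primeO (of_nat q)"
  shows "(\<forall>d\<in>KS2 p q. (odd (ordK pi2 d) \<or> odd (ordK pi2bar d)) \<longrightarrow> \<not> selmer p q d)
       \<and> selmer p q (of_nat p) \<and> selmer p q (of_nat q)
       \<and> (selmer p q (-1) \<longleftrightarrow> p mod 56 \<in> {3, 31, 45})"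
  using not_selmer_odd_ordK[OF assms(3,4)] selmer_p selmer_q assms(1,2)
    selmer_minus_one_iff[OF assms(1-3,5-7)] by (auto simp: prime_gt_0_nat)

end
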